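(* Let $X$ be a metric space with bounded geometry, $Y\subseteq X$ a subset, and $U\subseteq\beta X$ an invariant open subset; put $U^{\beta Y}=U\cap\beta Y$. Then, regarding $C^*(Y)$ as a subalgebra of $C^*(X)$, $$\mathcal I(Y,U^{\beta Y})=\mathcal I(X,U)\cap C^*(Y)\quad\text{and}\quad\mathcal G(Y,U^{\beta Y})=\mathcal G(X,U)\cap C^*(Y).$$
   Context: Metric spaces are discrete with bounded geometry. $\beta X$ is the Stone–Čech compactification; $\beta Y$ is identified with the closure of $Y$ in $\beta X$, and the coarse groupoid satisfies $G(Y)=G(X)\cap r^{-1}(\beta Y)\cap s^{-1}(\beta Y)$, where $G(X)=\bigcup_{R\ge0}\overline{\{(x,y):d(x,y)\le R\}}\subseteq\beta(X\times X)$ with range/source maps $r,s$ extending coordinate projections. $U$ is invariant if $r(\gamma)\in U\iff s(\gamma)\in U$ for all $\gamma\in G(X)$; then $U^{\beta Y}$ is $G(Y)$-invariant open. $\mathcal H$ is separable infinite-dimensional, $\mathcal H_X=\ell^2(X)\otimes\mathcal H$, and $C^*(Y)$ (built on $\ell^2(Y)\otimes\mathcal H\subseteq\mathcal H_X$) is viewed inside $C^*(X)$ by extending operators by $0$. $\mathbb C[X]$: finite-propagation operators with compact matrix entries $T_{xy}$; $C^*(X)$ its closure. With $\operatorname{supp}_\varepsilon(T)=\{(x,y):\|T_{xy}\|\ge\varepsilon\}$, $r$ the first-coordinate projection and closures in $\beta X$: $\mathcal I(X,U)$ is the closed ideal of $C^*(X)$ generated by $\{T\in\mathbb C[X]:\overline{r(\operatorname{supp}_\varepsilon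 T)}\subseteq U\ \forall\varepsilon>0\}$ and $\mathcal G(X,U)=\{T\in C^*(X):\overline{r(\operatorname{supp}_\varepsilon T)}\subseteq U\ \forall\varepsilon>0\}$; analogously for $Y$ with $U^{\beta Y}$. *)

theory Defs
  imports "HOL-Analysis.Analysis"
begin

definition is_ultrafilter :: "'b filter \<Rightarrow> bool" where
  "is_ultrafilter F \<longleftrightarrow> F \<noteq> bot \<and> (\<forall>P. eventually P F \<or> eventually (\<lambda>x. \<not> P x) F)"

text \<open>beta B: the Stone--Cech compactification of the discrete space B (all of the type),
  realised as the ultrafilters on B with the topology generated by the basic clopen sets.\<close>
definition beta_top :: "'b filter topology" where
  "beta_top = topology_generated_by
     {{F. is_ultrafilter F \<and> eventually (\<lambda>x. x \<in> A) F} | A. True}"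

definition pt :: "'b \<Rightarrow> 'b filter" where
  "pt x = principal {x}"

definition bclos :: "'b filter topology \<Rightarrow> 'b set \<Rightarrow> 'b filter set" where
  "bclos T A = T closure_of (pt ` A)"

text \<open>beta Y, identified with the closure of Y in beta X.\<close>
definition betaY :: "'b set \<Rightarrow> 'b filter set" where
  "betaY Y = bclos beta_top Y"

definition coarse_groupoid :: "('a::metric_space \<times> 'a) filter set" where
  "coarse_groupoid = (\<Union>R\<in>{R::real. R \<ge> 0}. bclos beta_top {(x, y). dist x y \<le> R})"

text \<open>Range and source: continuous extensions of the coordinate projections.\<close>
definition rng :: "('a \<times> 'a) filter \<Rightarrow> 'a filter" where "rng \<gamma> = filtermap fst \<gamma>"
definition src :: "('a \<times> 'a) filter \<Rightarrow> 'a filter" where "src \<gamma> = filtermap snd \<gamma>"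

definition invariant :: "'a::metric_space filter set \<Rightarrow> bool" where
  "invariant U \<longleftrightarrow> (\<forall>\<gamma>\<in>coarse_groupoid. rng \<gamma> \<in> U \<longleftrightarrow> src \<gamma> \<in> U)"

definition bounded_geometry :: "'a::metric_space itself \<Rightarrow> bool" where
  "bounded_geometry _ \<longleftrightarrow> (\<forall>R::real. \<exists>N::nat. \<forall>x::'a. finite (cball x R) \<and> card (cball x R) \<le> N)"

text \<open>An operator on l2(I) is represented by its matrix M p q = <e_p, T e_q>.\<close>

definition form_vals :: "('i \<Rightarrow> 'i \<Rightarrow> complex) \<Rightarrow> real set" where
  "form_vals M = {cmod (\<Sum>p\<in>F. \<Sum>q\<in>F. cnj (u p) * M p q * v q) | F u v.
      finite F \<and> (\<Sum>p\<in>F. (cmod (u p))\<^sup>2) \<le> 1 \<and> (\<Sum>p\<in>F. (cmod (v p))\<^sup>2) \<le> 1}"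

definition bounded_op :: "('i \<Rightarrow> 'i \<Rightarrow> complex) \<Rightarrow> bool" where
  "bounded_op M \<longleftrightarrow> bdd_above (form_vals M)"

definition opnorm :: "('i \<Rightarrow> 'i \<Rightarrow> complex) \<Rightarrow> real" where
  "opnorm M = Sup (form_vals M)"

definition mmul :: "('i \<Rightarrow> 'i \<Rightarrow> complex) \<Rightarrow> ('i \<Rightarrow> 'i \<Rightarrow> complex) \<Rightarrow> ('i \<Rightarrow> 'i \<Rightarrow> complex)" where
  "mmul M N = (\<lambda>p r. \<Sum>\<^sub>\<infinity>q. M p q * N q r)"

definition l2vec :: "('i \<Rightarrow> complex) \<Rightarrow> bool" where
  "l2vec u \<longleftrightarrow> (\<lambda>i. (cmod (u i))\<^sup>2) summable_on UNIV"

definition finite_rank :: "(nat \<Rightarrow> nat \<Rightarrow> complex) \<Rightarrow> bool" where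
  "finite_rank K \<longleftrightarrow> (\<exists>n::nat. \<exists>u v. (\<forall>k<n. l2vec (u k) \<and> l2vec (v k)) \<and>
       K = (\<lambda>i j. \<Sum>k<n. u k i * cnj (v k j)))"

definition compact_op :: "(nat \<Rightarrow> nat \<Rightarrow> complex) \<Rightarrow> bool" where
  "compact_op K \<longleftrightarrow> bounded_op K \<and> (\<forall>e>0. \<exists>F. finite_rank F \<and> opnorm (\<lambda>i j. K i j - F i j) < e)"

definition entry :: "('a \<times> nat \<Rightarrow> 'a \<times> nat \<Rightarrow> complex) \<Rightarrow> 'a \<Rightarrow> 'a \<Rightarrow> (nat \<Rightarrow> nat \<Rightarrow> complex)" where
  "entry T x y = (\<lambda>i j. T (x, i) (y, j))"

text \<open>Operators on l2(Z) \<otimes> H, extended by 0 to H_X.\<close>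
definition supported_in :: "'a set \<Rightarrow> ('a \<times> nat \<Rightarrow> 'a \<times> nat \<Rightarrow> complex) \<Rightarrow> bool" where
  "supported_in Z T \<longleftrightarrow> (\<forall>p q. T p q \<noteq> 0 \<longrightarrow> fst p \<in> Z \<and> fst q \<in> Z)"

definition alg_roe :: "'a::metric_space set \<Rightarrow> ('a \<times> nat \<Rightarrow> 'a \<times> nat \<Rightarrow> complex) set" where
  "alg_roe Z = {T. bounded_op T \<and> supported_in Z T \<and>
      (\<exists>R. \<forall>x y. dist x y > R \<longrightarrow> entry T x y = (\<lambda>i j. 0)) \<and>
      (\<forall>x y. compact_op (entry T x y))}"

definition roe :: "'a::metric_space set \<Rightarrow> ('a \<times> nat \<Rightarrow> 'a \<times> nat \<Rightarrow> complex) set" where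
  "roe Z = {M. bounded_op M \<and> (\<forall>e>0. \<exists>T\<in>alg_roe Z. opnorm (\<lambda>p q. M p q - T p q) < e)}"

definition supp_eps :: "real \<Rightarrow> ('a \<times> nat \<Rightarrow> 'a \<times> nat \<Rightarrow> complex) \<Rightarrow> ('a \<times> 'a) set" where
  "supp_eps e T = {(x, y). opnorm (entry T x y) \<ge> e}"

definition closed_ideal_gen :: "('i \<Rightarrow> 'i \<Rightarrow> complex) set \<Rightarrow> ('i \<Rightarrow> 'i \<Rightarrow> complex) set \<Rightarrow> ('i \<Rightarrow> 'i \<Rightarrow> complex) set" where
  "closed_ideal_gen A S = \<Inter>{J. J \<subseteq> A \<and> S \<subseteq> J \<and>
      (\<forall>a\<in>J. \<forall>b\<in>J. (\<lambda>p q. a p q + b p q) \<in> J) \<and> (\<forall>c::complex. \<forall>a\<in>J. (\<lambda>p q. c * a p q) \<in> J) \<and>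
      (\<forall>a\<in>J. \<forall>b\<in>A. mmul a b \<in> J \<and> mmul b a \<in> J) \<and>
      (\<forall>M\<in>A. (\<forall>e>0. \<exists>T\<in>J. opnorm (\<lambda>p q. M p q - T p q) < e) \<longrightarrow> M \<in> J)}"

definition ideal_I :: "'a filter topology \<Rightarrow> 'a::metric_space set \<Rightarrow> 'a filter set \<Rightarrow> ('a \<times> nat \<Rightarrow> 'a \<times> nat \<Rightarrow> complex) set" where
  "ideal_I T Z V = closed_ideal_gen (roe Z)
     {S\<in>alg_roe Z. \<forall>e>0. bclos T (fst ` supp_eps e S) \<subseteq> V}"

definition ideal_G :: "'a filter topology \<Rightarrow> 'a::metric_space set \<Rightarrow> 'a filter set \<Rightarrow> ('a \<times> nat \<Rightarrow> 'a \<times> nat \<Rightarrow> complex) set" where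
  "ideal_G T Z V = {S\<in>roe Z. \<forall>e>0. bclos T (fst ` supp_eps e S) \<subseteq> V}"

end

theory Submission
  imports Defs
begin

text \<open>
  The generators of I(X,U), i.e. the finite-propagation operators whose epsilon-supports have
  closure inside U, already form an algebraic ideal of C[X]: if a has propagation R, the
  epsilon-support of a S lies in the R-neighbourhood of some delta-support of S (bounded geometry
  bounds the number of contributing blocks), and invariance of U keeps the closure of such a
  neighbourhood inside U. Hence I(X,U) is just the norm closure of its generators. An operator
  M of C*(Y) approximated by a generator S is approximated at least as well by the compression
  of S to Y, which is a generator for Y because closures of subsets of Y in beta Y and in beta X
  coincide; conversely, a closed ideal of C*(X) containing the generators meets C*(Y) in a closed
  ideal of C*(Y) containing the generators for Y. The identity for G is the same fact about
  closures.
\<close>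

section \<open>Operator norms of matrices\<close>

type_synonym 'i mat = "'i \<Rightarrow> 'i \<Rightarrow> complex"

definition form_on :: "'i mat \<Rightarrow> 'i set \<Rightarrow> 'i set \<Rightarrow> ('i \<Rightarrow> complex) \<Rightarrow> ('i \<Rightarrow> complex) \<Rightarrow> complex" where
  "form_on M A B u v = (\<Sum>p\<in>A. \<Sum>q\<in>B. cnj (u p) * M p q * v q)"

abbreviation l2_on :: "'i set \<Rightarrow> ('i \<Rightarrow> complex) \<Rightarrow> real" where
  "l2_on A u \<equiv> L2_set (\<lambda>p. cmod (u p)) A"

lemma form_vals_le_opnorm: "bounded_op M \<Longrightarrow> x \<in> form_vals M \<Longrightarrow> x \<le> opnorm M"
  unfolding bounded_op_def opnorm_def by (rule cSup_upper)

lemma zero_in_form_vals: "0 \<in> form_vals M"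
  unfolding form_vals_def by (rule CollectI, rule exI[of _ "{}"]) auto

lemma opnorm_nonneg: "bounded_op M \<Longrightarrow> 0 \<le> opnorm M"
  using form_vals_le_opnorm zero_in_form_vals by blast

lemma form_vals_iff:
  "x \<in> form_vals M \<longleftrightarrow>
     (\<exists>F u v. finite F \<and> l2_on F u \<le> 1 \<and> l2_on F v \<le> 1 \<and> x = cmod (form_on M F F u v))"
  unfolding form_vals_def form_on_def L2_set_def by auto

lemma form_on_in_form_vals:
  assumes "finite A" "finite B" "l2_on A u \<le> 1" "l2_on B v \<le> 1"
  shows "cmod (form_on M A B u v) \<in> form_vals M"
proof -
  let ?u = "\<lambda>p. if p \<in> A then u p else 0" and ?v = "\<lambda>q. if q \<in> B then v q else 0"
  have "form_on M (A \<union> B) (A \<union> B) ?u ?v = form_on M A B u v"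
    unfolding form_on_def using assms(1,2)
    by (intro sum.mono_neutral_cong_right ballI) (auto intro!: sum.mono_neutral_cong_right)
  moreover have "l2_on (A \<union> B) ?u = l2_on A u" "l2_on (A \<union> B) ?v = l2_on B v"
    unfolding L2_set_def using assms(1,2)
    by (auto intro!: arg_cong[where f=sqrt] sum.mono_neutral_cong_right)
  ultimately show ?thesis
    unfolding form_vals_iff using assms by (metis finite_UnI)
qed

lemma form_on_le_opnorm:
  assumes M: "bounded_op M" and A: "finite A" and B: "finite B"
  shows "cmod (form_on M A B u v) \<le> opnorm M * l2_on A u * l2_on B v"
proof (cases "l2_on A u = 0 \<or> l2_on B v = 0")
  case True
  then have "form_on M A B u v = 0"
    using A B by (auto simp: form_on_def L2_set_eq_0_iff)
  then show ?thesis using opnorm_nonneg[OF M] by simp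
next
  case False
  define a b where "a = l2_on A u" and "b = l2_on B v"
  have "a > 0" "b > 0" using False unfolding a_def b_def by (auto simp: less_le)
  define u' v' where "u' p = u p / of_real a" and "v' q = v q / of_real b" for p q
  have "l2_on A u' = l2_on A u / a" "l2_on B v' = l2_on B v / b"
    unfolding u'_def v'_def divide_inverse using \<open>a > 0\<close> \<open>b > 0\<close>
    by (simp_all add: L2_set_left_distrib norm_mult norm_inverse)
  then have "cmod (form_on M A B u' v') \<le> opnorm M"
    using \<open>a > 0\<close> \<open>b > 0\<close> A B
    by (intro form_vals_le_opnorm[OF M] form_on_in_form_vals) (auto simp: a_def b_def)
  moreover have "form_on M A B u' v' = form_on M A B u v / of_real (a * b)"
    unfolding form_on_def u'_def v'_def by (simp add: sum_divide_distrib)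
  ultimately show ?thesis
    using \<open>a > 0\<close> \<open>b > 0\<close> by (simp add: norm_divide norm_mult a_def b_def field_simps)
qed

lemma bounded_op_opnorm_leI:
  assumes c: "0 \<le> c"
    and bound: "\<And>A B u v. finite A \<Longrightarrow> finite B \<Longrightarrow>
                  cmod (form_on M A B u v) \<le> c * l2_on A u * l2_on B v"
  shows "bounded_op M \<and> opnorm M \<le> c"
proof -
  have le: "x \<le> c" if x_in: "x \<in> form_vals M" for x
  proof -
    obtain F u v where F: "finite F" "l2_on F u \<le> 1" "l2_on F v \<le> 1"
      and x: "x = cmod (form_on M F F u v)"
      using x_in unfolding form_vals_iff by blast
    have "x \<le> c * l2_on F u * l2_on F v" unfolding x using bound F(1) by blast
    also have "\<dots> \<le> c * 1 * 1" using c F by (intro mult_mono) auto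
    finally show ?thesis by simp
  qed
  have "bounded_op M" unfolding bounded_op_def by (rule bdd_aboveI) (rule le)
  moreover have "opnorm M \<le> c" unfolding opnorm_def using le zero_in_form_vals by (intro cSup_least) auto
  ultimately show ?thesis ..
qed

lemma form_on_add: "form_on (\<lambda>p q. M p q + N p q) A B u v = form_on M A B u v + form_on N A B u v"
  unfolding form_on_def by (simp add: distrib_left distrib_right sum.distrib)

lemma form_on_diff: "form_on (\<lambda>p q. M p q - N p q) A B u v = form_on M A B u v - form_on N A B u v"
  unfolding form_on_def by (simp add: right_diff_distrib left_diff_distrib sum_subtractf)

lemma form_on_cmult: "form_on (\<lambda>p q. c * M p q) A B u v = c * form_on M A B u v"
  unfolding form_on_def by (simp add: sum_distrib_left mult_ac)

lemma opnorm_add_le: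
  fixes M N :: "'i mat"
  assumes M: "bounded_op M" and N: "bounded_op N"
  shows "bounded_op (\<lambda>p q. M p q + N p q) \<and> opnorm (\<lambda>p q. M p q + N p q) \<le> opnorm M + opnorm N"
proof (rule bounded_op_opnorm_leI)
  show "0 \<le> opnorm M + opnorm N" using opnorm_nonneg[OF M] opnorm_nonneg[OF N] by simp
  fix A B :: "'i set" and u v :: "'i \<Rightarrow> complex" assume "finite A" "finite B"
  have "cmod (form_on (\<lambda>p q. M p q + N p q) A B u v) \<le> cmod (form_on M A B u v) + cmod (form_on N A B u v)"
    unfolding form_on_add by (rule norm_triangle_ineq)
  also have "\<dots> \<le> opnorm M * l2_on A u * l2_on B v + opnorm N * l2_on A u * l2_on B v"
    using \<open>finite A\<close> \<open>finite B\<close> by (intro add_mono form_on_le_opnorm M N)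
  finally show "cmod (form_on (\<lambda>p q. M p q + N p q) A B u v) \<le> (opnorm M + opnorm N) * l2_on A u * l2_on B v"
    by (simp add: distrib_right)
qed

lemma opnorm_diff_le:
  fixes M N :: "'i mat"
  assumes M: "bounded_op M" and N: "bounded_op N"
  shows "bounded_op (\<lambda>p q. M p q - N p q) \<and> opnorm (\<lambda>p q. M p q - N p q) \<le> opnorm M + opnorm N"
proof (rule bounded_op_opnorm_leI)
  show "0 \<le> opnorm M + opnorm N" using opnorm_nonneg[OF M] opnorm_nonneg[OF N] by simp
  fix A B :: "'i set" and u v :: "'i \<Rightarrow> complex" assume "finite A" "finite B"
  have "cmod (form_on (\<lambda>p q. M p q - N p q) A B u v) \<le> cmod (form_on M A B u v) + cmod (form_on N A B u v)"
    unfolding form_on_diff by (rule norm_triangle_ineq4)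
  also have "\<dots> \<le> opnorm M * l2_on A u * l2_on B v + opnorm N * l2_on A u * l2_on B v"
    using \<open>finite A\<close> \<open>finite B\<close> by (intro add_mono form_on_le_opnorm M N)
  finally show "cmod (form_on (\<lambda>p q. M p q - N p q) A B u v) \<le> (opnorm M + opnorm N) * l2_on A u * l2_on B v"
    by (simp add: distrib_right)
qed

lemma opnorm_diff_triangle:
  assumes "bounded_op M" "bounded_op T" "bounded_op S"
  shows "opnorm (\<lambda>p q. M p q - S p q) \<le> opnorm (\<lambda>p q. M p q - T p q) + opnorm (\<lambda>p q. T p q - S p q)"
proof -
  have "bounded_op (\<lambda>p q. M p q - T p q)" "bounded_op (\<lambda>p q. T p q - S p q)"
    using opnorm_diff_le assms by blast+
  from opnorm_add_le[OF this] show ?thesis by simp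
qed

lemma opnorm_cmult_le:
  fixes M :: "'i mat"
  assumes M: "bounded_op M"
  shows "bounded_op (\<lambda>p q. c * M p q) \<and> opnorm (\<lambda>p q. c * M p q) \<le> cmod c * opnorm M"
proof (rule bounded_op_opnorm_leI)
  show "0 \<le> cmod c * opnorm M" using opnorm_nonneg[OF M] by simp
  fix A B :: "'i set" and u v :: "'i \<Rightarrow> complex" assume "finite A" "finite B"
  then show "cmod (form_on (\<lambda>p q. c * M p q) A B u v) \<le> cmod c * opnorm M * l2_on A u * l2_on B v"
    unfolding form_on_cmult norm_mult mult.assoc
    by (intro mult_left_mono) (auto simp: mult.assoc[symmetric] form_on_le_opnorm M)
qed

lemma opnorm_zero: "bounded_op (\<lambda>p q::'i. 0::complex) \<and> opnorm (\<lambda>p q::'i. 0::complex) = 0"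
proof -
  have "bounded_op (\<lambda>p q::'i. 0::complex) \<and> opnorm (\<lambda>p q::'i. 0::complex) \<le> 0"
    by (rule bounded_op_opnorm_leI) (auto simp: form_on_def)
  then show ?thesis using opnorm_nonneg[of "\<lambda>p q::'i. 0::complex"] by auto
qed

lemma opnorm_restrict_le:
  fixes M :: "'i mat"
  assumes M: "bounded_op M"
  shows "bounded_op (\<lambda>p q. if P p \<and> Q q then M p q else 0)
       \<and> opnorm (\<lambda>p q. if P p \<and> Q q then M p q else 0) \<le> opnorm M"
proof (rule bounded_op_opnorm_leI)
  show "0 \<le> opnorm M" using opnorm_nonneg[OF M] .
  fix A B :: "'i set" and u v :: "'i \<Rightarrow> complex" assume A: "finite A" and B: "finite B"
  let ?u = "\<lambda>p. if P p then u p else 0" and ?v = "\<lambda>q. if Q q then v q else 0"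
  have eq: "form_on (\<lambda>p q. if P p \<and> Q q then M p q else 0) A B u v = form_on M A B ?u ?v"
    unfolding form_on_def by (intro sum.cong refl) auto
  have "opnorm M * l2_on A ?u * l2_on B ?v \<le> opnorm M * l2_on A u * l2_on B v"
    using opnorm_nonneg[OF M] by (intro mult_mono[OF mult_left_mono] L2_set_mono) auto
  with form_on_le_opnorm[OF M A B, of ?u ?v]
  show "cmod (form_on (\<lambda>p q. if P p \<and> Q q then M p q else 0) A B u v)
      \<le> opnorm M * l2_on A u * l2_on B v"
    unfolding eq by (rule order_trans)
qed

lemma cmod_le_opnorm:
  assumes "bounded_op M" shows "cmod (M p q) \<le> opnorm M"
  using form_on_le_opnorm[OF assms, of "{p}" "{q}" "\<lambda>_. 1" "\<lambda>_. 1"] by (simp add: form_on_def)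

lemma opnorm_entry_le:
  fixes M :: "('a \<times> nat) mat"
  assumes M: "bounded_op M"
  shows "bounded_op (entry M x y) \<and> opnorm (entry M x y) \<le> opnorm M"
proof (rule bounded_op_opnorm_leI)
  show "0 \<le> opnorm M" using opnorm_nonneg[OF M] .
  have l2: "l2_on (Pair z ` C) w = l2_on C (\<lambda>n. w (z, n))" for z :: 'a and C and w :: "'a \<times> nat \<Rightarrow> complex"
    unfolding L2_set_def by (simp add: sum.reindex inj_on_def)
  fix A B :: "nat set" and u v :: "nat \<Rightarrow> complex" assume A: "finite A" and B: "finite B"
  have "form_on (entry M x y) A B u v
      = form_on M (Pair x ` A) (Pair y ` B) (\<lambda>p. u (snd p)) (\<lambda>q. v (snd q))"
    unfolding form_on_def entry_def by (simp add: sum.reindex inj_on_def)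
  then show "cmod (form_on (entry M x y) A B u v) \<le> opnorm M * l2_on A u * l2_on B v"
    using form_on_le_opnorm[OF M finite_imageI[OF A] finite_imageI[OF B],
        of "Pair x" "Pair y" "\<lambda>p. u (snd p)" "\<lambda>q. v (snd q)"]
    by (simp add: l2)
qed

section \<open>Matrix products\<close>

lemma l2_on_square: "(l2_on A u)\<^sup>2 = (\<Sum>p\<in>A. (cmod (u p))\<^sup>2)"
  unfolding L2_set_def by (simp add: sum_nonneg)

lemma le_if_square_le_mult:
  fixes n K :: real
  assumes "n\<^sup>2 \<le> K * n" "0 \<le> K"
  shows "n \<le> K"
proof (cases "n > 0")
  case True
  then show ?thesis using assms(1) by (simp add: power2_eq_square)
qed (use assms(2) in simp)

lemma l2_on_row_le:
  fixes M :: "'i mat"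
  assumes M: "bounded_op M" and A: "finite A" and G: "finite G"
  shows "l2_on G (\<lambda>q. \<Sum>p\<in>A. cnj (u p) * M p q) \<le> opnorm M * l2_on A u"
proof -
  define w where "w q = (\<Sum>p\<in>A. cnj (u p) * M p q)" for q
  have "form_on M A G u (\<lambda>q. cnj (w q)) = (\<Sum>q\<in>G. w q * cnj (w q))"
    unfolding form_on_def w_def by (subst sum.swap) (simp add: sum_distrib_right)
  also have "\<dots> = of_real ((l2_on G w)\<^sup>2)"
    unfolding l2_on_square of_real_sum by (intro sum.cong refl) (rule complex_norm_square[symmetric])
  finally have "(l2_on G w)\<^sup>2 \<le> opnorm M * l2_on A u * l2_on G w"
    using form_on_le_opnorm[OF M A G, of u "\<lambda>q. cnj (w q)"] by (simp add: norm_power)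
  then show ?thesis
    unfolding w_def by (rule le_if_square_le_mult) (use opnorm_nonneg[OF M] in simp)
qed

lemma l2_on_col_le:
  fixes M :: "'i mat"
  assumes M: "bounded_op M" and B: "finite B" and G: "finite G"
  shows "l2_on G (\<lambda>p. \<Sum>q\<in>B. M p q * v q) \<le> opnorm M * l2_on B v"
proof -
  define w where "w p = (\<Sum>q\<in>B. M p q * v q)" for p
  have "form_on M G B w v = (\<Sum>p\<in>G. cnj (w p) * w p)"
    unfolding form_on_def w_def by (simp add: sum_distrib_left mult.assoc)
  also have "\<dots> = of_real ((l2_on G w)\<^sup>2)"
    unfolding l2_on_square of_real_sum
    by (intro sum.cong refl) (simp only: mult.commute[of "cnj _"] complex_norm_square)
  finally have "(l2_on G w)\<^sup>2 \<le> opnorm M * l2_on B v * l2_on G w"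
    using form_on_le_opnorm[OF M G B, of w v] by (simp add: norm_power mult_ac)
  then show ?thesis
    unfolding w_def by (rule le_if_square_le_mult) (use opnorm_nonneg[OF M] in simp)
qed

lemma l2_on_row_entries_le:
  assumes "bounded_op M" "finite G"
  shows "l2_on G (\<lambda>q. M p q) \<le> opnorm M"
  using l2_on_row_le[OF assms(1) _ assms(2), of "{p}" "\<lambda>_. 1"] by simp

lemma l2_on_col_entries_le:
  assumes "bounded_op M" "finite G"
  shows "l2_on G (\<lambda>p. M p q) \<le> opnorm M"
  using l2_on_col_le[OF assms(1) _ assms(2), of "{q}" "\<lambda>_. 1"] by simp

lemma cauchy_schwarz_infsum:
  fixes x y :: "'i \<Rightarrow> complex"
  assumes x: "\<And>G. finite G \<Longrightarrow> l2_on G x \<le> X" and y: "\<And>G. finite G \<Longrightarrow> l2_on G y \<le> Y"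
  shows "(\<lambda>q. x q * y q) summable_on UNIV \<and> cmod (\<Sum>\<^sub>\<infinity>q. x q * y q) \<le> X * Y"
proof -
  have "0 \<le> X" "0 \<le> Y" using x[of "{}"] y[of "{}"] by simp_all
  have fin: "(\<Sum>q\<in>G. cmod (x q * y q)) \<le> X * Y" if G: "finite G" for G
  proof -
    have "(\<Sum>q\<in>G. cmod (x q * y q)) \<le> l2_on G x * l2_on G y"
      using L2_set_mult_ineq[of "\<lambda>q. cmod (x q)" "\<lambda>q. cmod (y q)" G] by (simp add: norm_mult)
    also have "\<dots> \<le> X * Y"
      using x[OF G] y[OF G] \<open>0 \<le> X\<close> by (intro mult_mono) auto
    finally show ?thesis .
  qed
  have abs_sm: "(\<lambda>q. cmod (x q * y q)) summable_on UNIV"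
    by (rule nonneg_bdd_above_summable_on) (auto intro!: bdd_aboveI[where M="X * Y"] fin)
  have "cmod (\<Sum>\<^sub>\<infinity>q. x q * y q) \<le> (\<Sum>\<^sub>\<infinity>q. cmod (x q * y q))"
    using abs_sm by (rule norm_infsum_bound)
  also have "\<dots> \<le> X * Y" using abs_sm by (rule infsum_le_finite_sums) (rule fin)
  finally show ?thesis using abs_summable_summable[OF abs_sm] by simp
qed

lemma mmul_summable:
  assumes "bounded_op M" "bounded_op N"
  shows "(\<lambda>q. M p q * N q r) summable_on UNIV"
  using cauchy_schwarz_infsum[OF l2_on_row_entries_le[OF assms(1)] l2_on_col_entries_le[OF assms(2)]]
  by blast

lemma infsum_diff:
  fixes f g :: "'a \<Rightarrow> 'b::{topological_ab_group_add, t2_space}"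
  assumes "f summable_on A" "g summable_on A"
  shows "(\<Sum>\<^sub>\<infinity>x\<in>A. f x - g x) = infsum f A - infsum g A"
  using infsum_add[OF assms(1) summable_on_uminus[THEN iffD2, OF assms(2)]]
  by (simp add: infsum_uminus)

lemma summable_on_finite_sum:
  fixes f :: "'k \<Rightarrow> 'a \<Rightarrow> 'b::topological_comm_monoid_add"
  assumes "finite K" "\<And>k. k \<in> K \<Longrightarrow> f k summable_on A"
  shows "(\<lambda>x. \<Sum>k\<in>K. f k x) summable_on A"
  using assms by (induction K rule: finite_induct) (auto intro!: summable_on_add)

lemma infsum_finite_sum:
  fixes f :: "'k \<Rightarrow> 'a \<Rightarrow> 'b::{topological_comm_monoid_add, t2_space}"
  assumes "finite K" "\<And>k. k \<in> K \<Longrightarrow> f k summable_on A"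
  shows "(\<Sum>\<^sub>\<infinity>x\<in>A. \<Sum>k\<in>K. f k x) = (\<Sum>k\<in>K. infsum (f k) A)"
  using assms
proof (induction K rule: finite_induct)
  case (insert k K)
  then show ?case by (simp add: infsum_add summable_on_finite_sum)
qed simp

lemma form_on_mmul:
  assumes M: "bounded_op M" and N: "bounded_op N" and A: "finite A" and B: "finite B"
  shows "form_on (mmul M N) A B u v
       = (\<Sum>\<^sub>\<infinity>q. (\<Sum>p\<in>A. cnj (u p) * M p q) * (\<Sum>r\<in>B. N q r * v r))"
proof -
  have sm: "(\<lambda>q. cnj (u p) * (M p q * N q r) * v r) summable_on UNIV" for p r
    using mmul_summable[OF M N] by (intro summable_on_cmult_left summable_on_cmult_right)
  have "form_on (mmul M N) A B u v = (\<Sum>p\<in>A. \<Sum>r\<in>B. \<Sum>\<^sub>\<infinity>q. cnj (u p) * (M p q * N q r) * v r)"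
    unfolding form_on_def mmul_def by (simp add: infsum_cmult_left' infsum_cmult_right')
  also have "\<dots> = (\<Sum>p\<in>A. \<Sum>\<^sub>\<infinity>q. \<Sum>r\<in>B. cnj (u p) * (M p q * N q r) * v r)"
    using B sm by (simp add: infsum_finite_sum)
  also have "\<dots> = (\<Sum>\<^sub>\<infinity>q. \<Sum>p\<in>A. \<Sum>r\<in>B. cnj (u p) * (M p q * N q r) * v r)"
    using A B sm by (intro infsum_finite_sum[symmetric] summable_on_finite_sum) auto
  also have "\<dots> = (\<Sum>\<^sub>\<infinity>q. (\<Sum>p\<in>A. cnj (u p) * M p q) * (\<Sum>r\<in>B. N q r * v r))"
    unfolding sum_product by (simp add: mult_ac)
  finally show ?thesis .
qed

lemma opnorm_mmul_le:
  fixes M N :: "'i mat"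
  assumes M: "bounded_op M" and N: "bounded_op N"
  shows "bounded_op (mmul M N) \<and> opnorm (mmul M N) \<le> opnorm M * opnorm N"
proof (rule bounded_op_opnorm_leI)
  show "0 \<le> opnorm M * opnorm N" using opnorm_nonneg[OF M] opnorm_nonneg[OF N] by simp
  fix A B :: "'i set" and u v :: "'i \<Rightarrow> complex" assume A: "finite A" and B: "finite B"
  have "cmod (\<Sum>\<^sub>\<infinity>q. (\<Sum>p\<in>A. cnj (u p) * M p q) * (\<Sum>r\<in>B. N q r * v r))
      \<le> (opnorm M * l2_on A u) * (opnorm N * l2_on B v)"
    using l2_on_row_le[OF M A] l2_on_col_le[OF N B] by (intro conjunct2[OF cauchy_schwarz_infsum])
  then show "cmod (form_on (mmul M N) A B u v) \<le> opnorm M * opnorm N * l2_on A u * l2_on B v"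
    unfolding form_on_mmul[OF M N A B] by (simp add: mult_ac)
qed

lemma mmul_diff_left:
  assumes "bounded_op M" "bounded_op M'" "bounded_op N"
  shows "mmul (\<lambda>p q. M p q - M' p q) N = (\<lambda>p r. mmul M N p r - mmul M' N p r)"
  unfolding mmul_def using mmul_summable[OF assms(1,3)] mmul_summable[OF assms(2,3)]
  by (simp add: left_diff_distrib infsum_diff)

lemma mmul_diff_right:
  assumes "bounded_op M" "bounded_op N" "bounded_op N'"
  shows "mmul M (\<lambda>p q. N p q - N' p q) = (\<lambda>p r. mmul M N p r - mmul M N' p r)"
  unfolding mmul_def using mmul_summable[OF assms(1,2)] mmul_summable[OF assms(1,3)]
  by (simp add: right_diff_distrib infsum_diff)

lemma opnorm_mmul_diff_le:
  fixes M M' N N' :: "'i mat"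
  assumes M: "bounded_op M" and M': "bounded_op M'" and N: "bounded_op N" and N': "bounded_op N'"
  shows "opnorm (\<lambda>p r. mmul M N p r - mmul M' N' p r)
      \<le> opnorm (\<lambda>p q. M p q - M' p q) * opnorm N + opnorm M' * opnorm (\<lambda>p q. N p q - N' p q)"
proof -
  have dM: "bounded_op (\<lambda>p q. M p q - M' p q)" using opnorm_diff_le[OF M M'] by simp
  have dN: "bounded_op (\<lambda>p q. N p q - N' p q)" using opnorm_diff_le[OF N N'] by simp
  have "(\<lambda>p r. mmul M N p r - mmul M' N' p r)
      = (\<lambda>p r. mmul (\<lambda>p q. M p q - M' p q) N p r + mmul M' (\<lambda>p q. N p q - N' p q) p r)"
    unfolding mmul_diff_left[OF M M' N] mmul_diff_right[OF M' N N'] by simp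
  then show ?thesis
    using opnorm_add_le[OF conjunct1[OF opnorm_mmul_le[OF dM N]] conjunct1[OF opnorm_mmul_le[OF M' dN]]]
      opnorm_mmul_le[OF dM N] opnorm_mmul_le[OF M' dN]
    by simp
qed

section \<open>Norm closures\<close>

definition op_closure :: "'i mat set \<Rightarrow> 'i mat set" where
  "op_closure A = {M. bounded_op M \<and> (\<forall>e>0. \<exists>T\<in>A. opnorm (\<lambda>p q. M p q - T p q) < e)}"

lemma op_closureI:
  assumes "bounded_op M" "\<And>e. e > 0 \<Longrightarrow> \<exists>T\<in>A. opnorm (\<lambda>p q. M p q - T p q) < e"
  shows "M \<in> op_closure A"
  using assms unfolding op_closure_def by blast

lemma op_closureD:
  assumes "M \<in> op_closure A"
  shows "bounded_op M" and "e > 0 \<Longrightarrow> \<exists>T\<in>A. opnorm (\<lambda>p q. M p q - T p q) < e"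
  using assms unfolding op_closure_def by blast+

lemma op_closure_mono: "A \<subseteq> B \<Longrightarrow> op_closure A \<subseteq> op_closure B"
  unfolding op_closure_def by blast

lemma subset_op_closure:
  assumes "A \<subseteq> Collect bounded_op" shows "A \<subseteq> op_closure A"
proof
  fix M assume "M \<in> A"
  moreover have "opnorm (\<lambda>p q. M p q - M p q) = 0" by (simp add: opnorm_zero[THEN conjunct2])
  ultimately show "M \<in> op_closure A"
    using assms by (intro op_closureI) (auto intro!: bexI[of _ M])
qed

lemma op_closure_op_closure:
  assumes A: "A \<subseteq> Collect bounded_op"
  shows "op_closure (op_closure A) \<subseteq> op_closure A"
proof
  fix M assume M: "M \<in> op_closure (op_closure A)"
  show "M \<in> op_closure A"
  proof (rule op_closureI)
    show "bounded_op M" using op_closureD(1)[OF M] .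
    fix e :: real assume "e > 0"
    then obtain T where T: "T \<in> op_closure A" "opnorm (\<lambda>p q. M p q - T p q) < e / 2"
      using op_closureD(2)[OF M, of "e / 2"] by auto
    then obtain S where S: "S \<in> A" "opnorm (\<lambda>p q. T p q - S p q) < e / 2"
      using op_closureD(2)[OF T(1), of "e / 2"] \<open>e > 0\<close> by auto
    have "opnorm (\<lambda>p q. M p q - S p q) < e"
      using opnorm_diff_triangle[OF op_closureD(1)[OF M] op_closureD(1)[OF T(1)]] S A T(2) by fastforce
    then show "\<exists>S\<in>A. opnorm (\<lambda>p q. M p q - S p q) < e" using S(1) by blast
  qed
qed

lemma op_closure_add:
  assumes A: "A \<subseteq> Collect bounded_op" and B: "B \<subseteq> Collect bounded_op"
    and AB: "\<And>a b. a \<in> A \<Longrightarrow> b \<in> B \<Longrightarrow> (\<lambda>p q. a p q + b p q) \<in> C"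
    and M: "M \<in> op_closure A" and N: "N \<in> op_closure B"
  shows "(\<lambda>p q. M p q + N p q) \<in> op_closure C"
proof (rule op_closureI)
  show "bounded_op (\<lambda>p q. M p q + N p q)"
    using opnorm_add_le[OF op_closureD(1)[OF M] op_closureD(1)[OF N]] by simp
  fix e :: real assume "e > 0"
  then obtain a b where a: "a \<in> A" "opnorm (\<lambda>p q. M p q - a p q) < e / 2"
    and b: "b \<in> B" "opnorm (\<lambda>p q. N p q - b p q) < e / 2"
    using op_closureD(2)[OF M, of "e / 2"] op_closureD(2)[OF N, of "e / 2"] by auto
  have "bounded_op (\<lambda>p q. M p q - a p q)" "bounded_op (\<lambda>p q. N p q - b p q)"
    using opnorm_diff_le op_closureD(1)[OF M] op_closureD(1)[OF N] a(1) b(1) A B by blast+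
  from opnorm_add_le[OF this] a(2) b(2)
  have "opnorm (\<lambda>p q. (M p q + N p q) - (a p q + b p q)) < e"
    by (simp add: algebra_simps)
  then show "\<exists>T\<in>C. opnorm (\<lambda>p q. M p q + N p q - T p q) < e"
    using AB[OF a(1) b(1)] by (auto intro!: bexI[of _ "\<lambda>p q. a p q + b p q"])
qed

lemma op_closure_cmult:
  assumes A: "A \<subseteq> Collect bounded_op"
    and AC: "\<And>a. a \<in> A \<Longrightarrow> (\<lambda>p q. c * a p q) \<in> C"
    and M: "M \<in> op_closure A"
  shows "(\<lambda>p q. c * M p q) \<in> op_closure C"
proof (rule op_closureI)
  show "bounded_op (\<lambda>p q. c * M p q)" using opnorm_cmult_le[OF op_closureD(1)[OF M]] by simp
  fix e :: real assume "e > 0"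
  then obtain a where a: "a \<in> A" "opnorm (\<lambda>p q. M p q - a p q) < e / (cmod c + 1)"
    using op_closureD(2)[OF M, of "e / (cmod c + 1)"] by (auto simp: add_nonneg_pos)
  have "bounded_op (\<lambda>p q. M p q - a p q)"
    using opnorm_diff_le op_closureD(1)[OF M] a(1) A by blast
  from opnorm_cmult_le[OF this, of c]
  have "opnorm (\<lambda>p q. c * M p q - c * a p q) \<le> cmod c * opnorm (\<lambda>p q. M p q - a p q)"
    by (simp add: algebra_simps)
  also have "\<dots> \<le> (cmod c + 1) * opnorm (\<lambda>p q. M p q - a p q)"
    using opnorm_nonneg[OF \<open>bounded_op (\<lambda>p q. M p q - a p q)\<close>] by (simp add: mult_right_mono)
  also have "\<dots> < (cmod c + 1) * (e / (cmod c + 1))"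
    using a(2) by (intro mult_strict_left_mono) (auto simp: add_nonneg_pos)
  also have "\<dots> = e" by (simp add: add_nonneg_pos add_nonneg_eq_0_iff)
  finally show "\<exists>T\<in>C. opnorm (\<lambda>p q. c * M p q - T p q) < e"
    using AC[OF a(1)] by (auto intro!: bexI[of _ "\<lambda>p q. c * a p q"])
qed

lemma op_closure_mmul:
  assumes A: "A \<subseteq> Collect bounded_op" and B: "B \<subseteq> Collect bounded_op"
    and AB: "\<And>a b. a \<in> A \<Longrightarrow> b \<in> B \<Longrightarrow> mmul a b \<in> C"
    and M: "M \<in> op_closure A" and N: "N \<in> op_closure B"
  shows "mmul M N \<in> op_closure C"
proof (rule op_closureI)
  have M_bd: "bounded_op M" and N_bd: "bounded_op N" using op_closureD(1) M N by blast+
  show "bounded_op (mmul M N)" using opnorm_mmul_le[OF M_bd N_bd] by simp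
  fix e :: real assume "e > 0"
  define d where "d = min 1 (e / (opnorm M + opnorm N + 2))"
  have "opnorm M \<ge> 0" "opnorm N \<ge> 0" using opnorm_nonneg M_bd N_bd by blast+
  then have "d > 0" "d \<le> 1" "d * (opnorm M + opnorm N + 2) \<le> e"
    using \<open>e > 0\<close> by (auto simp: d_def min_def pos_le_divide_eq[symmetric])
  obtain a b where a: "a \<in> A" "opnorm (\<lambda>p q. M p q - a p q) < d"
    and b: "b \<in> B" "opnorm (\<lambda>p q. N p q - b p q) < d"
    using op_closureD(2)[OF M \<open>d > 0\<close>] op_closureD(2)[OF N \<open>d > 0\<close>] by blast
  have a_bd: "bounded_op a" and b_bd: "bounded_op b" using a(1) b(1) A B by blast+
  have "bounded_op (\<lambda>p q. M p q - a p q)" using opnorm_diff_le[OF M_bd a_bd] by simp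
  from opnorm_diff_le[OF M_bd this]
  have "opnorm a \<le> opnorm M + opnorm (\<lambda>p q. M p q - a p q)" by simp
  then have na: "opnorm a \<le> opnorm M + 1" using a(2) \<open>d \<le> 1\<close> by linarith
  have "opnorm (\<lambda>p r. mmul M N p r - mmul a b p r)
      \<le> opnorm (\<lambda>p q. M p q - a p q) * opnorm N + opnorm a * opnorm (\<lambda>p q. N p q - b p q)"
    by (rule opnorm_mmul_diff_le[OF M_bd a_bd N_bd b_bd])
  also have "\<dots> \<le> d * opnorm N + (opnorm M + 1) * d"
    using a(2) b(2) na opnorm_nonneg[OF a_bd] \<open>opnorm N \<ge> 0\<close> \<open>d > 0\<close>
      opnorm_nonneg[OF opnorm_diff_le[OF N_bd b_bd, THEN conjunct1]]
    by (intro add_mono mult_mono) auto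
  also have "\<dots> < e"
    using \<open>d * (opnorm M + opnorm N + 2) \<le> e\<close> \<open>d > 0\<close> by (simp add: algebra_simps)
  finally show "\<exists>T\<in>C. opnorm (\<lambda>p q. mmul M N p q - T p q) < e"
    using AB[OF a(1) b(1)] by blast
qed

section \<open>Finite-rank and compact operators\<close>

lemma l2vec_iff_l2_on_bounded: "l2vec u \<longleftrightarrow> (\<exists>C. \<forall>G. finite G \<longrightarrow> l2_on G u \<le> C)"
proof
  assume u: "l2vec u"
  have "l2_on G u \<le> sqrt (\<Sum>\<^sub>\<infinity>i. (cmod (u i))\<^sup>2)" if "finite G" for G
    unfolding L2_set_def using u that
    by (intro real_sqrt_le_mono finite_sum_le_infsum) (auto simp: l2vec_def)
  then show "\<exists>C. \<forall>G. finite G \<longrightarrow> l2_on G u \<le> C" by blast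
next
  assume "\<exists>C. \<forall>G. finite G \<longrightarrow> l2_on G u \<le> C"
  then obtain C where C: "\<And>G. finite G \<Longrightarrow> l2_on G u \<le> C" by blast
  have "(\<Sum>i\<in>G. (cmod (u i))\<^sup>2) \<le> C\<^sup>2" if "finite G" for G
    using power_mono[OF C[OF that] L2_set_nonneg, of 2] by (simp add: l2_on_square)
  then show "l2vec u"
    unfolding l2vec_def by (intro nonneg_bdd_above_summable_on bdd_aboveI) auto
qed

lemma rank_one_bounded:
  assumes "l2vec u" "l2vec v"
  shows "bounded_op (\<lambda>i j. u i * cnj (v j))"
proof -
  obtain Cu Cv where Cu: "\<And>G. finite G \<Longrightarrow> l2_on G u \<le> Cu" and Cv: "\<And>G. finite G \<Longrightarrow> l2_on G v \<le> Cv"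
    using assms unfolding l2vec_iff_l2_on_bounded by blast
  have dot: "cmod (\<Sum>i\<in>A. cnj (a i) * w i) \<le> l2_on A a * C"
    if "finite A" "\<And>G. finite G \<Longrightarrow> l2_on G w \<le> C" for A :: "'a set" and a w :: "'a \<Rightarrow> complex" and C
  proof -
    have "cmod (\<Sum>i\<in>A. cnj (a i) * w i) \<le> (\<Sum>i\<in>A. cmod (a i) * cmod (w i))"
      by (rule order_trans[OF norm_sum]) (simp add: norm_mult)
    also have "\<dots> \<le> l2_on A a * l2_on A w"
      using L2_set_mult_ineq[of "\<lambda>i. cmod (a i)" "\<lambda>i. cmod (w i)" A] by simp
    also have "\<dots> \<le> l2_on A a * C" using that by (intro mult_left_mono) auto
    finally show ?thesis .
  qed
  have "bounded_op (\<lambda>i j. u i * cnj (v j)) \<and> opnorm (\<lambda>i j. u i * cnj (v j)) \<le> Cu * Cv"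
  proof (rule bounded_op_opnorm_leI)
    show "0 \<le> Cu * Cv" using Cu[of "{}"] Cv[of "{}"] by simp
    fix A B :: "'a set" and a b :: "'a \<Rightarrow> complex" assume A: "finite A" and B: "finite B"
    have "form_on (\<lambda>i j. u i * cnj (v j)) A B a b = (\<Sum>i\<in>A. cnj (a i) * u i) * cnj (\<Sum>j\<in>B. cnj (b j) * v j)"
      unfolding form_on_def cnj_sum sum_product by (simp add: mult_ac)
    then have "cmod (form_on (\<lambda>i j. u i * cnj (v j)) A B a b)
        = cmod (\<Sum>i\<in>A. cnj (a i) * u i) * cmod (\<Sum>j\<in>B. cnj (b j) * v j)"
      by (simp only: norm_mult complex_mod_cnj)
    also have "\<dots> \<le> (l2_on A a * Cu) * (l2_on B b * Cv)"
      using dot[OF A Cu, of a] dot[OF B Cv, of b] Cu[of "{}"] by (intro mult_mono) auto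
    finally show "cmod (form_on (\<lambda>i j. u i * cnj (v j)) A B a b) \<le> Cu * Cv * l2_on A a * l2_on B b"
      by (simp add: mult_ac)
  qed
  then show ?thesis ..
qed

lemma bounded_op_sum:
  fixes R :: "'k \<Rightarrow> 'i mat"
  assumes "finite K" "\<And>k. k \<in> K \<Longrightarrow> bounded_op (R k)"
  shows "bounded_op (\<lambda>i j. \<Sum>k\<in>K. R k i j) \<and> opnorm (\<lambda>i j. \<Sum>k\<in>K. R k i j) \<le> (\<Sum>k\<in>K. opnorm (R k))"
  using assms
proof (induction K rule: finite_induct)
  case empty
  then show ?case using opnorm_zero[where 'i='i] by simp
next
  case (insert k K)
  then have "bounded_op (R k)" "bounded_op (\<lambda>i j. \<Sum>k\<in>K. R k i j)"
    "opnorm (\<lambda>i j. \<Sum>k\<in>K. R k i j) \<le> (\<Sum>k\<in>K. opnorm (R k))"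
    by simp_all
  with opnorm_add_le[OF this(1,2)] show ?case using insert.hyps by simp
qed

lemma finite_rank_bounded:
  assumes "finite_rank F" shows "bounded_op F"
proof -
  obtain n :: nat and u v where uv: "\<forall>k<n. l2vec (u k) \<and> l2vec (v k)"
    and F: "F = (\<lambda>i j. \<Sum>k<n. u k i * cnj (v k j))"
    using assms unfolding finite_rank_def by blast
  show ?thesis
    unfolding F using uv rank_one_bounded by (intro conjunct1[OF bounded_op_sum]) auto
qed

lemma finite_rank_add:
  assumes "finite_rank F1" "finite_rank F2"
  shows "finite_rank (\<lambda>i j. F1 i j + F2 i j)"
proof -
  obtain n1 :: nat and u1 v1 where uv1: "\<forall>k<n1. l2vec (u1 k) \<and> l2vec (v1 k)"
    and F1: "F1 = (\<lambda>i j. \<Sum>k<n1. u1 k i * cnj (v1 k j))"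
    using assms(1) unfolding finite_rank_def by blast
  obtain n2 :: nat and u2 v2 where uv2: "\<forall>k<n2. l2vec (u2 k) \<and> l2vec (v2 k)"
    and F2: "F2 = (\<lambda>i j. \<Sum>k<n2. u2 k i * cnj (v2 k j))"
    using assms(2) unfolding finite_rank_def by blast
  define u where "u k = (if k < n1 then u1 k else u2 (k - n1))" for k
  define v where "v k = (if k < n1 then v1 k else v2 (k - n1))" for k
  have sum_split: "(\<Sum>k<n1 + n2. g k) = (\<Sum>k<n1. g k) + (\<Sum>k<n2. g (k + n1))" for g :: "nat \<Rightarrow> complex"
  proof -
    have "(\<Sum>k<n1 + n2. g k) = sum g {0..<n1} + sum g {n1..<n1 + n2}"
      by (simp add: atLeast0LessThan[symmetric] sum.atLeastLessThan_concat)
    also have "sum g {n1..<n1 + n2} = (\<Sum>k<n2. g (k + n1))"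
      using sum.shift_bounds_nat_ivl[of g 0 n1 n2] by (simp add: add.commute atLeast0LessThan)
    finally show ?thesis by (simp add: atLeast0LessThan)
  qed
  have "\<forall>k<n1 + n2. l2vec (u k) \<and> l2vec (v k)" using uv1 uv2 unfolding u_def v_def by auto
  moreover have "(\<lambda>i j. F1 i j + F2 i j) = (\<lambda>i j. \<Sum>k<n1 + n2. u k i * cnj (v k j))"
    unfolding sum_split F1 F2 u_def v_def by simp
  ultimately show ?thesis unfolding finite_rank_def by blast
qed

lemma finite_rank_cmult:
  assumes "finite_rank F"
  shows "finite_rank (\<lambda>i j. c * F i j)"
proof -
  obtain n :: nat and u v where uv: "\<forall>k<n. l2vec (u k) \<and> l2vec (v k)"
    and F: "F = (\<lambda>i j. \<Sum>k<n. u k i * cnj (v k j))"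
    using assms unfolding finite_rank_def by blast
  have "l2vec (\<lambda>i. c * u k i)" if "k < n" for k
    using uv that unfolding l2vec_def norm_mult power_mult_distrib by (simp add: summable_on_cmult_right)
  moreover have "(\<lambda>i j. c * F i j) = (\<lambda>i j. \<Sum>k<n. (c * u k i) * cnj (v k j))"
    unfolding F by (simp add: sum_distrib_left mult_ac)
  ultimately show ?thesis
    unfolding finite_rank_def using uv by (intro exI[of _ n] exI[of _ "\<lambda>k i. c * u k i"] exI[of _ v]) auto
qed

lemma bounded_op_cnj_transpose:
  fixes B :: "'i mat"
  assumes B: "bounded_op B" shows "bounded_op (\<lambda>p q. cnj (B q p))"
proof -
  have "bounded_op (\<lambda>p q. cnj (B q p)) \<and> opnorm (\<lambda>p q. cnj (B q p)) \<le> opnorm B"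
  proof (rule bounded_op_opnorm_leI)
    show "0 \<le> opnorm B" using opnorm_nonneg[OF B] .
    fix A C :: "'i set" and a b :: "'i \<Rightarrow> complex" assume A: "finite A" and C: "finite C"
    have "form_on (\<lambda>p q. cnj (B q p)) A C a b = cnj (form_on B C A b a)"
      unfolding form_on_def cnj_sum by (subst sum.swap) (simp add: mult_ac)
    then have "cmod (form_on (\<lambda>p q. cnj (B q p)) A C a b) = cmod (form_on B C A b a)" by simp
    also have "\<dots> \<le> opnorm B * l2_on C b * l2_on A a" by (rule form_on_le_opnorm[OF B C A])
    finally show "cmod (form_on (\<lambda>p q. cnj (B q p)) A C a b) \<le> opnorm B * l2_on A a * l2_on C b"
      by (simp add: mult_ac)
  qed
  then show ?thesis ..
qed

lemma l2vec_mmul_vec: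
  fixes B :: "'i mat"
  assumes B: "bounded_op B" and v: "l2vec v"
  shows "l2vec (\<lambda>i. \<Sum>\<^sub>\<infinity>q. B i q * v q)"
proof -
  obtain C where C: "\<And>G. finite G \<Longrightarrow> l2_on G v \<le> C"
    using v unfolding l2vec_iff_l2_on_bounded by blast
  define w where "w i = (\<Sum>\<^sub>\<infinity>q. B i q * v q)" for i
  have sm: "(\<lambda>q. B i q * v q) summable_on UNIV" for i
    using cauchy_schwarz_infsum[OF l2_on_row_entries_le[OF B] C] by blast
  have "l2_on G w \<le> opnorm B * C" if G: "finite G" for G
  proof (rule le_if_square_le_mult)
    have "of_real ((l2_on G w)\<^sup>2) = (\<Sum>i\<in>G. cnj (w i) * w i)"
      unfolding l2_on_square of_real_sum
      by (intro sum.cong refl) (simp only: mult.commute[of "cnj _"] complex_norm_square)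
    also have "\<dots> = (\<Sum>i\<in>G. \<Sum>\<^sub>\<infinity>q. cnj (w i) * (B i q * v q))"
      unfolding w_def by (simp add: infsum_cmult_right')
    also have "\<dots> = (\<Sum>\<^sub>\<infinity>q. \<Sum>i\<in>G. cnj (w i) * (B i q * v q))"
      using G sm by (intro infsum_finite_sum[symmetric] summable_on_cmult_right) auto
    also have "\<dots> = (\<Sum>\<^sub>\<infinity>q. (\<Sum>i\<in>G. cnj (w i) * B i q) * v q)"
      unfolding sum_distrib_right by (simp add: mult_ac)
    finally have eq: "of_real ((l2_on G w)\<^sup>2) = (\<Sum>\<^sub>\<infinity>q. (\<Sum>i\<in>G. cnj (w i) * B i q) * v q)" .
    have "(l2_on G w)\<^sup>2 = cmod (\<Sum>\<^sub>\<infinity>q. (\<Sum>i\<in>G. cnj (w i) * B i q) * v q)"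
      unfolding eq[symmetric] by (simp add: norm_power)
    also have "\<dots> \<le> (opnorm B * l2_on G w) * C"
      using l2_on_row_le[OF B G] C by (intro conjunct2[OF cauchy_schwarz_infsum])
    finally show "(l2_on G w)\<^sup>2 \<le> opnorm B * C * l2_on G w" by (simp add: mult_ac)
    show "0 \<le> opnorm B * C" using opnorm_nonneg[OF B] C[of "{}"] by simp
  qed
  then show ?thesis unfolding l2vec_iff_l2_on_bounded w_def by blast
qed

lemma finite_rank_mmul_right:
  fixes F B :: "nat mat"
  assumes F: "finite_rank F" and B: "bounded_op B"
  shows "finite_rank (mmul F B)"
proof -
  obtain n :: nat and u v where uv: "\<forall>k<n. l2vec (u k) \<and> l2vec (v k)"
    and F_eq: "F = (\<lambda>i j. \<Sum>k<n. u k i * cnj (v k j))"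
    using F unfolding finite_rank_def by blast
  define w where "w k j = (\<Sum>\<^sub>\<infinity>q. cnj (B q j) * v k q)" for k j
  have "mmul F B i j = (\<Sum>k<n. u k i * cnj (w k j))" for i j
  proof -
    have sm: "(\<lambda>q. cnj (v k q) * B q j) summable_on UNIV" if "k < n" for k
    proof -
      obtain C where "\<And>G. finite G \<Longrightarrow> l2_on G (v k) \<le> C"
        using uv \<open>k < n\<close> unfolding l2vec_iff_l2_on_bounded by blast
      then show ?thesis
        using cauchy_schwarz_infsum[of "\<lambda>q. cnj (v k q)" C "\<lambda>q. B q j" "opnorm B"]
          l2_on_col_entries_le[OF B] by simp
    qed
    have "mmul F B i j = (\<Sum>\<^sub>\<infinity>q. \<Sum>k<n. u k i * (cnj (v k q) * B q j))"
      unfolding mmul_def F_eq sum_distrib_right by (simp add: mult_ac)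
    also have "\<dots> = (\<Sum>k<n. \<Sum>\<^sub>\<infinity>q. u k i * (cnj (v k q) * B q j))"
      using sm by (intro infsum_finite_sum summable_on_cmult_right) auto
    also have "\<dots> = (\<Sum>k<n. u k i * cnj (w k j))"
      unfolding w_def infsum_cnj[symmetric] by (simp add: infsum_cmult_right' mult.commute)
    finally show ?thesis .
  qed
  moreover have "l2vec (w k)" if "k < n" for k
    unfolding w_def using uv that by (intro l2vec_mmul_vec bounded_op_cnj_transpose B) auto
  ultimately show ?thesis
    unfolding finite_rank_def using uv by (intro exI[of _ n] exI[of _ u] exI[of _ w]) auto
qed

lemma compact_op_iff: "compact_op K \<longleftrightarrow> K \<in> op_closure (Collect finite_rank)"
  unfolding compact_op_def op_closure_def by auto

lemma finite_rank_subset_bounded: "Collect finite_rank \<subseteq> Collect bounded_op"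
  using finite_rank_bounded by blast

lemma compact_op_bounded: "compact_op K \<Longrightarrow> bounded_op K"
  unfolding compact_op_def by simp

lemma compact_op_zero: "compact_op (\<lambda>i j. 0)"
proof -
  have "finite_rank (\<lambda>i j. 0)" unfolding finite_rank_def by (intro exI[of _ 0]) simp
  then show ?thesis
    unfolding compact_op_iff using subset_op_closure[OF finite_rank_subset_bounded] by blast
qed

lemma compact_op_add: "compact_op K \<Longrightarrow> compact_op L \<Longrightarrow> compact_op (\<lambda>i j. K i j + L i j)"
  unfolding compact_op_iff
  by (rule op_closure_add[OF finite_rank_subset_bounded finite_rank_subset_bounded])
     (simp_all add: finite_rank_add)

lemma compact_op_cmult: "compact_op K \<Longrightarrow> compact_op (\<lambda>i j. c * K i j)"
  unfolding compact_op_iff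
  by (rule op_closure_cmult[OF finite_rank_subset_bounded]) (simp_all add: finite_rank_cmult)

lemma compact_op_mmul_right:
  assumes "compact_op K" "bounded_op B"
  shows "compact_op (mmul K B)"
proof -
  have "B \<in> op_closure {B}" using subset_op_closure[of "{B}"] assms(2) by blast
  with assms(1) show ?thesis
    unfolding compact_op_iff using assms(2)
    by (intro op_closure_mmul[OF finite_rank_subset_bounded, of "{B}"]) (auto simp: finite_rank_mmul_right)
qed

lemma compact_op_sum:
  "finite S \<Longrightarrow> (\<And>y. y \<in> S \<Longrightarrow> compact_op (f y)) \<Longrightarrow> compact_op (\<lambda>i j. \<Sum>y\<in>S. f y i j)"
  by (induction S rule: finite_induct) (simp_all add: compact_op_zero compact_op_add)

section \<open>Roe algebras\<close>

lemma bounded_geometryE: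
  assumes "bounded_geometry TYPE('a::metric_space)"
  obtains N :: nat where "\<And>x::'a. finite {y. dist x y \<le> R}" "\<And>x::'a. card {y. dist x y \<le> R} \<le> N"
  using assms unfolding bounded_geometry_def cball_def by blast

lemma alg_roeD:
  assumes "T \<in> alg_roe Z"
  shows "bounded_op T" "supported_in Z T" "\<And>x y. compact_op (entry T x y)"
  using assms unfolding alg_roe_def by auto

lemma alg_roe_propagation:
  fixes T :: "('a::metric_space \<times> nat) mat"
  assumes "T \<in> alg_roe Z"
  obtains R where "\<And>x y i j. dist x y > R \<Longrightarrow> T (x, i) (y, j) = 0"
proof -
  obtain R where R: "\<And>x y. dist x y > R \<Longrightarrow> entry T x y = (\<lambda>i j. 0)"
    using assms unfolding alg_roe_def by blast
  have "T (x, i) (y, j) = 0" if "dist x y > R" for x y i j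
    using R[OF that] unfolding entry_def by (metis (mono_tags))
  then show ?thesis by (rule that)
qed

lemma alg_roeI:
  assumes "bounded_op T" "supported_in Z T" "\<And>x y i j. dist x y > R \<Longrightarrow> T (x, i) (y, j) = 0"
    "\<And>x y. compact_op (entry T x y)"
  shows "T \<in> alg_roe Z"
  unfolding alg_roe_def using assms by (auto simp: entry_def intro!: exI[of _ R])

lemma alg_roe_bounded: "alg_roe Z \<subseteq> Collect bounded_op"
  using alg_roeD(1) by blast

lemma roe_eq_op_closure: "roe Z = op_closure (alg_roe Z)"
  unfolding roe_def op_closure_def ..

lemma alg_roe_subset_roe: "alg_roe Z \<subseteq> roe Z"
  unfolding roe_eq_op_closure by (rule subset_op_closure[OF alg_roe_bounded])

lemma roe_bounded: "M \<in> roe Z \<Longrightarrow> bounded_op M"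
  unfolding roe_def by simp

lemma alg_roe_mono: "Y \<subseteq> Z \<Longrightarrow> alg_roe Y \<subseteq> alg_roe Z"
  unfolding alg_roe_def supported_in_def by blast

lemma roe_mono: "Y \<subseteq> Z \<Longrightarrow> roe Y \<subseteq> roe Z"
  unfolding roe_eq_op_closure by (intro op_closure_mono alg_roe_mono)

lemma roe_supported:
  assumes M: "M \<in> roe Z" shows "supported_in Z M"
  unfolding supported_in_def
proof (intro allI impI)
  fix p q assume "M p q \<noteq> 0"
  then obtain T where T: "T \<in> alg_roe Z" "opnorm (\<lambda>p q. M p q - T p q) < cmod (M p q)"
    using op_closureD(2)[OF M[unfolded roe_eq_op_closure], of "cmod (M p q)"] by auto
  have "cmod (M p q - T p q) \<le> opnorm (\<lambda>p q. M p q - T p q)"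
    using opnorm_diff_le[OF roe_bounded[OF M] alg_roeD(1)[OF T(1)]] by (intro cmod_le_opnorm) simp
  then have "T p q \<noteq> 0" using T(2) by auto
  then show "fst p \<in> Z \<and> fst q \<in> Z" using alg_roeD(2)[OF T(1)] unfolding supported_in_def by blast
qed

lemma mmul_eq_0I:
  assumes "\<And>q. M p q * N q r = 0" shows "mmul M N p r = 0"
proof -
  have "(\<lambda>q. M p q * N q r) = (\<lambda>q. 0)" using assms by (rule ext)
  then show ?thesis unfolding mmul_def by simp
qed

lemma entry_mmul_eq_sum:
  fixes M N :: "('a \<times> nat) mat"
  assumes M: "bounded_op M" and N: "bounded_op N" and S: "finite S"
    and vanish: "\<And>i j y k. y \<notin> S \<Longrightarrow> M (x, i) (y, k) * N (y, k) (z, j) = 0"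
  shows "entry (mmul M N) x z = (\<lambda>i j. \<Sum>y\<in>S. mmul (entry M x y) (entry N y z) i j)"
proof (intro ext)
  fix i j
  define f where "f q = M (x, i) q * N q (z, j)" for q
  have sm: "f summable_on UNIV" unfolding f_def by (rule mmul_summable[OF M N])
  have "entry (mmul M N) x z i j = infsum f UNIV"
    unfolding entry_def mmul_def f_def ..
  also have "\<dots> = infsum f (\<Union>y\<in>S. Pair y ` UNIV)"
  proof (rule infsum_cong_neutral)
    fix q :: "'a \<times> nat" assume q: "q \<in> UNIV - (\<Union>y\<in>S. Pair y ` UNIV)"
    obtain y k where "q = (y, k)" by (cases q)
    moreover from q this have "y \<notin> S" by auto
    ultimately show "f q = 0" unfolding f_def by (simp add: vanish)
  qed auto
  also have "\<dots> = (\<Sum>y\<in>S. infsum f (Pair y ` UNIV))"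
    using S by (intro sum_infsum[symmetric] summable_on_subset_banach[OF sm]) auto
  also have "\<dots> = (\<Sum>y\<in>S. mmul (entry M x y) (entry N y z) i j)"
    unfolding mmul_def entry_def f_def by (subst infsum_reindex) (auto simp: inj_on_def o_def)
  finally show "entry (mmul M N) x z i j = (\<lambda>i j. \<Sum>y\<in>S. mmul (entry M x y) (entry N y z) i j) i j"
    by simp
qed

lemma alg_roe_add:
  assumes S: "S \<in> alg_roe Z" and T: "T \<in> alg_roe Z"
  shows "(\<lambda>p q. S p q + T p q) \<in> alg_roe Z"
proof -
  obtain R1 where R1: "\<And>x y i j. dist x y > R1 \<Longrightarrow> S (x, i) (y, j) = 0"
    using alg_roe_propagation[OF S] by metis
  obtain R2 where R2: "\<And>x y i j. dist x y > R2 \<Longrightarrow> T (x, i) (y, j) = 0"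
    using alg_roe_propagation[OF T] by metis
  show ?thesis
  proof (rule alg_roeI[where R="max R1 R2"])
    show "bounded_op (\<lambda>p q. S p q + T p q)"
      using opnorm_add_le[OF alg_roeD(1)[OF S] alg_roeD(1)[OF T]] by simp
    show "supported_in Z (\<lambda>p q. S p q + T p q)"
      unfolding supported_in_def
    proof (intro allI impI)
      fix p q assume "S p q + T p q \<noteq> 0"
      then have "S p q \<noteq> 0 \<or> T p q \<noteq> 0" by auto
      then show "fst p \<in> Z \<and> fst q \<in> Z"
        using alg_roeD(2)[OF S] alg_roeD(2)[OF T] unfolding supported_in_def by blast
    qed
    show "S (x, i) (y, j) + T (x, i) (y, j) = 0" if "max R1 R2 < dist x y" for x y i j
      using that R1 R2 by simp
    show "compact_op (entry (\<lambda>p q. S p q + T p q) x y)" for x y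
      using compact_op_add[OF alg_roeD(3)[OF S] alg_roeD(3)[OF T]] by (simp add: entry_def)
  qed
qed

lemma alg_roe_cmult:
  assumes S: "S \<in> alg_roe Z"
  shows "(\<lambda>p q. c * S p q) \<in> alg_roe Z"
proof -
  obtain R where R: "\<And>x y i j. dist x y > R \<Longrightarrow> S (x, i) (y, j) = 0"
    using alg_roe_propagation[OF S] by metis
  show ?thesis
  proof (rule alg_roeI[where R=R])
    show "bounded_op (\<lambda>p q. c * S p q)" using opnorm_cmult_le[OF alg_roeD(1)[OF S]] by simp
    show "supported_in Z (\<lambda>p q. c * S p q)"
      using alg_roeD(2)[OF S] unfolding supported_in_def by auto
    show "c * S (x, i) (y, j) = 0" if "R < dist x y" for x y i j
      using that R by simp
    show "compact_op (entry (\<lambda>p q. c * S p q) x y)" for x y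
      using compact_op_cmult[OF alg_roeD(3)[OF S]] by (simp add: entry_def)
  qed
qed

lemma alg_roe_mmul:
  fixes S T :: "('a::metric_space \<times> nat) mat"
  assumes bg: "bounded_geometry TYPE('a)" and S: "S \<in> alg_roe Z" and T: "T \<in> alg_roe Z"
  shows "mmul S T \<in> alg_roe Z"
proof -
  obtain R1 where R1: "\<And>x y i j. dist x y > R1 \<Longrightarrow> S (x, i) (y, j) = 0"
    using alg_roe_propagation[OF S] by metis
  obtain R2 where R2: "\<And>x y i j. dist x y > R2 \<Longrightarrow> T (x, i) (y, j) = 0"
    using alg_roe_propagation[OF T] by metis
  have bd: "bounded_op S" "bounded_op T" using alg_roeD(1) S T by auto
  show ?thesis
  proof (rule alg_roeI[where R="R1 + R2"])
    show "bounded_op (mmul S T)" using opnorm_mmul_le[OF bd] by simp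
    show "supported_in Z (mmul S T)"
      unfolding supported_in_def
    proof (intro allI impI)
      fix p r assume "mmul S T p r \<noteq> 0"
      then obtain q where "S p q \<noteq> 0" "T q r \<noteq> 0" using mmul_eq_0I[of S p T r] by force
      then show "fst p \<in> Z \<and> fst r \<in> Z"
        using alg_roeD(2)[OF S] alg_roeD(2)[OF T] unfolding supported_in_def by blast
    qed
    show "mmul S T (x, i) (z, j) = 0" if "R1 + R2 < dist x z" for x z i j
    proof (rule mmul_eq_0I)
      fix q :: "'a \<times> nat"
      obtain y k where q: "q = (y, k)" by (cases q)
      have "dist x y > R1 \<or> dist y z > R2" using dist_triangle[of x z y] that by linarith
      then show "S (x, i) q * T q (z, j) = 0" using R1 R2 q by auto
    qed
    show "compact_op (entry (mmul S T) x z)" for x z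
    proof -
      have fin: "finite {y. dist x y \<le> R1}" for x :: 'a
        using bounded_geometryE[OF bg, of R1] by metis
      have "entry (mmul S T) x z = (\<lambda>i j. \<Sum>y\<in>{y. dist x y \<le> R1}. mmul (entry S x y) (entry T y z) i j)"
        by (rule entry_mmul_eq_sum[OF bd fin]) (auto simp: R1)
      then show ?thesis
        using alg_roeD(3)[OF S] alg_roeD(3)[OF T] compact_op_bounded
        by (simp add: compact_op_sum fin compact_op_mmul_right)
    qed
  qed
qed

lemma roe_add: "M \<in> roe Z \<Longrightarrow> N \<in> roe Z \<Longrightarrow> (\<lambda>p q. M p q + N p q) \<in> roe Z"
  unfolding roe_eq_op_closure
  by (rule op_closure_add[OF alg_roe_bounded alg_roe_bounded]) (simp_all add: alg_roe_add)

lemma roe_cmult: "M \<in> roe Z \<Longrightarrow> (\<lambda>p q. c * M p q) \<in> roe Z"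
  unfolding roe_eq_op_closure
  by (rule op_closure_cmult[OF alg_roe_bounded]) (simp_all add: alg_roe_cmult)

lemma roe_mmul:
  fixes M N :: "('a::metric_space \<times> nat) mat"
  assumes "bounded_geometry TYPE('a)"
  shows "M \<in> roe Z \<Longrightarrow> N \<in> roe Z \<Longrightarrow> mmul M N \<in> roe Z"
  unfolding roe_eq_op_closure
  by (rule op_closure_mmul[OF alg_roe_bounded alg_roe_bounded]) (simp_all add: alg_roe_mmul[OF assms])

definition compress :: "'a set \<Rightarrow> ('a \<times> nat) mat \<Rightarrow> ('a \<times> nat) mat" where
  "compress Y M = (\<lambda>p q. if fst p \<in> Y \<and> fst q \<in> Y then M p q else 0)"

lemma opnorm_compress_le:
  "bounded_op M \<Longrightarrow> bounded_op (compress Y M) \<and> opnorm (compress Y M) \<le> opnorm M"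
  unfolding compress_def by (rule opnorm_restrict_le)

lemma compress_diff: "compress Y (\<lambda>p q. M p q - T p q) = (\<lambda>p q. compress Y M p q - compress Y T p q)"
  unfolding compress_def by (intro ext) auto

lemma supported_inD: "supported_in Y M \<Longrightarrow> M p q \<noteq> 0 \<Longrightarrow> fst p \<in> Y \<and> fst q \<in> Y"
  unfolding supported_in_def by blast

lemma compress_eq_self:
  assumes "supported_in Y M" shows "compress Y M = M"
proof (intro ext)
  fix p q show "compress Y M p q = M p q"
    using supported_inD[OF assms, of p q] unfolding compress_def by auto
qed

lemma entry_compress:
  "entry (compress Y M) x y = (if x \<in> Y \<and> y \<in> Y then entry M x y else (\<lambda>i j. 0))"
  unfolding entry_def compress_def by auto

lemma compress_alg_roe:
  assumes T: "T \<in> alg_roe Z" shows "compress Y T \<in> alg_roe Y"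
proof -
  obtain R where R: "\<And>x y i j. dist x y > R \<Longrightarrow> T (x, i) (y, j) = 0"
    using alg_roe_propagation[OF T] by metis
  show ?thesis
  proof (rule alg_roeI[where R=R])
    show "bounded_op (compress Y T)" using opnorm_compress_le[OF alg_roeD(1)[OF T]] by simp
    show "supported_in Y (compress Y T)" unfolding supported_in_def compress_def by auto
    show "compress Y T (x, i) (y, j) = 0" if "R < dist x y" for x y i j
      using R[OF that] unfolding compress_def by simp
    show "compact_op (entry (compress Y T) x y)" for x y
      unfolding entry_compress using alg_roeD(3)[OF T] compact_op_zero by simp
  qed
qed

lemma supp_eps_compress:
  assumes "e > 0" shows "supp_eps e (compress Y M) = supp_eps e M \<inter> Y \<times> Y"
proof -
  have "e \<le> opnorm (entry (compress Y M) x y) \<longleftrightarrow> e \<le> opnorm (entry M x y) \<and> x \<in> Y \<and> y \<in> Y" for x y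
    using assms opnorm_zero[where 'i=nat, THEN conjunct2] by (simp add: entry_compress)
  then show ?thesis unfolding supp_eps_def by auto
qed

lemma fst_supp_eps_subset:
  assumes "e > 0" "supported_in Y M" shows "fst ` supp_eps e M \<subseteq> Y"
proof -
  have eq: "supp_eps e M = supp_eps e M \<inter> Y \<times> Y"
    using supp_eps_compress[OF assms(1), of Y M] unfolding compress_eq_self[OF assms(2)] .
  have "supp_eps e M \<subseteq> Y \<times> Y" by (subst eq) (rule Int_lower2)
  then show ?thesis by force
qed

section \<open>Closures in the Stone--Cech compactification\<close>

lemma pt_is_ultrafilter: "is_ultrafilter (pt x)"
  unfolding is_ultrafilter_def pt_def by (simp add: eventually_principal principal_eq_bot_iff)

lemma eventually_pt: "eventually P (pt x) \<longleftrightarrow> P x"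
  unfolding pt_def by (simp add: eventually_principal)

lemma is_ultrafilter_filtermap: "is_ultrafilter F \<Longrightarrow> is_ultrafilter (filtermap f F)"
  unfolding is_ultrafilter_def by (simp add: filtermap_bot_iff eventually_filtermap)

lemma topspace_beta_top: "topspace beta_top = {F. is_ultrafilter F}"
proof -
  have "{F. is_ultrafilter F} = {F. is_ultrafilter F \<and> eventually (\<lambda>x. x \<in> UNIV) F}" by simp
  then have "{F. is_ultrafilter F} \<in> {{F. is_ultrafilter F \<and> eventually (\<lambda>x. x \<in> A) F} | A. True}"
    by blast
  then show ?thesis unfolding beta_top_def topology_generated_by_topspace by auto
qed

lemma openin_beta_top_nbhd:
  assumes "openin beta_top T" "is_ultrafilter F" "F \<in> T"
  shows "\<exists>B. eventually (\<lambda>x. x \<in> B) F \<and> pt ` B \<subseteq> T"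
proof -
  have "generate_topology_on {{F. is_ultrafilter F \<and> eventually (\<lambda>x. x \<in> A) F} | A. True} T"
    using assms(1) unfolding beta_top_def by (simp add: openin_topology_generated_by_iff)
  then show ?thesis using assms(2,3)
  proof (induction arbitrary: F rule: generate_topology_on.induct)
    case (Int a b)
    then obtain B1 B2 where "eventually (\<lambda>x. x \<in> B1) F" "pt ` B1 \<subseteq> a"
      and "eventually (\<lambda>x. x \<in> B2) F" "pt ` B2 \<subseteq> b"
      by blast
    then show ?case by (intro exI[of _ "B1 \<inter> B2"]) (auto intro: eventually_conj)
  next
    case (UN K)
    then show ?case by blast
  next
    case (Basis s)
    then obtain A where s: "s = {F. is_ultrafilter F \<and> eventually (\<lambda>x. x \<in> A) F}" by blast
    then have "eventually (\<lambda>x. x \<in> A) F" using Basis.prems by simp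
    moreover have "pt ` A \<subseteq> s" unfolding s by (auto simp: pt_is_ultrafilter eventually_pt)
    ultimately show ?case by blast
  qed simp
qed

lemma bclos_beta_top: "bclos beta_top A = {F. is_ultrafilter F \<and> eventually (\<lambda>x. x \<in> A) F}"
proof (intro set_eqI iffI)
  fix F assume F: "F \<in> bclos beta_top A"
  have "F \<in> topspace beta_top" using subsetD[OF closure_of_subset_topspace F[unfolded bclos_def]] .
  then have u: "is_ultrafilter F" unfolding topspace_beta_top by simp
  show "F \<in> {F. is_ultrafilter F \<and> eventually (\<lambda>x. x \<in> A) F}"
  proof (rule ccontr)
    assume "F \<notin> {F. is_ultrafilter F \<and> eventually (\<lambda>x. x \<in> A) F}"
    then have ev: "eventually (\<lambda>x. x \<in> - A) F" using u unfolding is_ultrafilter_def by auto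
    define T where "T = {F. is_ultrafilter F \<and> eventually (\<lambda>x. x \<in> - A) F}"
    have "openin beta_top T" unfolding beta_top_def T_def by (rule topology_generated_by_Basis) blast
    moreover have "F \<in> T" unfolding T_def using u ev by simp
    ultimately obtain y where "y \<in> pt ` A" "y \<in> T" using F unfolding bclos_def in_closure_of by blast
    then show False unfolding T_def by (auto simp: eventually_pt)
  qed
next
  fix F assume "F \<in> {F. is_ultrafilter F \<and> eventually (\<lambda>x. x \<in> A) F}"
  then have u: "is_ultrafilter F" and ev: "eventually (\<lambda>x. x \<in> A) F" by auto
  show "F \<in> bclos beta_top A" unfolding bclos_def in_closure_of
  proof (intro conjI allI impI)
    show "F \<in> topspace beta_top" unfolding topspace_beta_top using u by simp
    fix T assume "F \<in> T \<and> openin beta_top T"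
    then obtain B where B: "eventually (\<lambda>x. x \<in> B) F" "pt ` B \<subseteq> T"
      using openin_beta_top_nbhd u by blast
    have "F \<noteq> bot" using u unfolding is_ultrafilter_def by simp
    then obtain a where "a \<in> B" "a \<in> A"
      using eventually_happens[OF eventually_conj[OF B(1) ev]] by blast
    then show "\<exists>y. y \<in> pt ` A \<and> y \<in> T" using B(2) by blast
  qed
qed

lemma bclos_beta_top_mono: "A \<subseteq> B \<Longrightarrow> bclos beta_top A \<subseteq> bclos beta_top B"
  unfolding bclos_beta_top by (auto elim: eventually_mono)

lemma bclos_Un: "bclos T (A \<union> B) = bclos T A \<union> bclos T B"
  unfolding bclos_def by (simp add: image_Un)

lemma invariant_bclos_thickening:
  fixes A :: "'a::metric_space set"
  assumes inv: "invariant U" and A: "bclos beta_top A \<subseteq> U"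
  shows "bclos beta_top {x. \<exists>z\<in>A. dist x z \<le> R} \<subseteq> U"
proof
  fix F assume "F \<in> bclos beta_top {x. \<exists>z\<in>A. dist x z \<le> R}"
  then have u: "is_ultrafilter F" and ev: "eventually (\<lambda>x. \<exists>z\<in>A. dist x z \<le> R) F"
    unfolding bclos_beta_top by auto
  define g where "g x = (SOME z. z \<in> A \<and> dist x z \<le> R)" for x
  have g: "g x \<in> A \<and> dist x (g x) \<le> R" if "\<exists>z\<in>A. dist x z \<le> R" for x
    unfolding g_def using that by (metis (mono_tags, lifting) someI_ex)
  have ev_g: "eventually (\<lambda>x. g x \<in> A \<and> dist x (g x) \<le> R) F"
    using ev by (rule eventually_mono) (rule g)
  \<comment> \<open>\<gamma> joins F to its image under g, so invariance carries membership in U from one to the other\<close>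
  define \<gamma> where "\<gamma> = filtermap (\<lambda>x. (x, g x)) F"
  have "\<gamma> \<in> bclos beta_top {(x, y). dist x y \<le> max R 0}"
    unfolding bclos_beta_top \<gamma>_def using is_ultrafilter_filtermap[OF u] ev_g
    by (auto simp: eventually_filtermap elim!: eventually_mono)
  then have "\<gamma> \<in> coarse_groupoid" unfolding coarse_groupoid_def by (intro UN_I[of "max R 0"]) auto
  moreover have "src \<gamma> \<in> U"
  proof -
    have "src \<gamma> = filtermap g F" unfolding src_def \<gamma>_def by (simp add: filtermap_filtermap)
    also have "\<dots> \<in> bclos beta_top A"
      unfolding bclos_beta_top using is_ultrafilter_filtermap[OF u] ev_g
      by (auto simp: eventually_filtermap elim!: eventually_mono)
    finally show ?thesis using A by blast
  qed
  moreover have "rng \<gamma> = F" unfolding rng_def \<gamma>_def by (simp add: filtermap_filtermap filtermap_ident)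
  ultimately show "F \<in> U" using inv unfolding invariant_def by metis
qed

lemma pt_image_subset_betaY: "B \<subseteq> Y \<Longrightarrow> pt ` B \<subseteq> betaY Y"
  unfolding betaY_def bclos_beta_top by (auto simp: pt_is_ultrafilter eventually_pt)

lemma bclos_subtopology_betaY:
  assumes "B \<subseteq> Y"
  shows "bclos (subtopology beta_top (betaY Y)) B = bclos beta_top B"
proof -
  have "bclos (subtopology beta_top (betaY Y)) B = betaY Y \<inter> bclos beta_top B"
    unfolding bclos_def closure_of_subtopology using pt_image_subset_betaY[OF assms]
    by (simp add: Int_absorb1)
  also have "\<dots> = bclos beta_top B"
    using bclos_beta_top_mono[OF assms] unfolding betaY_def by blast
  finally show ?thesis .
qed

section \<open>Propagation of epsilon-supports\<close>

lemma weighted_sum_ge_imp_term_ge: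
  fixes f g :: "'a \<Rightarrow> real"
  assumes C: "finite C" "card C \<le> N" and f: "\<And>y. y \<in> C \<Longrightarrow> 0 \<le> f y \<and> f y \<le> K"
    and "0 < K" "0 < e" and sum: "e \<le> (\<Sum>y\<in>C. f y * g y)"
  shows "\<exists>y\<in>C. e / ((real N + 1) * K) \<le> g y"
proof (rule ccontr)
  define \<delta> where "\<delta> = e / ((real N + 1) * K)"
  have "\<delta> > 0" unfolding \<delta>_def using \<open>0 < K\<close> \<open>0 < e\<close> by simp
  assume "\<not> (\<exists>y\<in>C. e / ((real N + 1) * K) \<le> g y)"
  then have small: "g y < \<delta>" if "y \<in> C" for y using that unfolding \<delta>_def by auto
  have "(\<Sum>y\<in>C. f y * g y) \<le> (\<Sum>y\<in>C. K * \<delta>)"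
  proof (rule sum_mono)
    fix y assume "y \<in> C"
    then have "f y * g y \<le> f y * \<delta>" using f small by (intro mult_left_mono) (auto intro: less_imp_le)
    also have "\<dots> \<le> K * \<delta>" using f \<open>y \<in> C\<close> \<open>\<delta> > 0\<close> by (intro mult_right_mono) auto
    finally show "f y * g y \<le> K * \<delta>" .
  qed
  also have "\<dots> \<le> real N * (K * \<delta>)" using C \<open>0 < K\<close> \<open>\<delta> > 0\<close> by (simp add: mult_right_mono)
  also have "\<dots> < (real N + 1) * (K * \<delta>)" using \<open>0 < K\<close> \<open>\<delta> > 0\<close> by simp
  also have "\<dots> = e" unfolding \<delta>_def using \<open>0 < K\<close> by simp
  finally show False using sum by simp
qed

lemma opnorm_entry_mmul_le:
  fixes M N :: "('a \<times> nat) mat"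
  assumes M: "bounded_op M" and N: "bounded_op N" and C: "finite C"
    and vanish: "\<And>i j y k. y \<notin> C \<Longrightarrow> M (x, i) (y, k) * N (y, k) (z, j) = 0"
  shows "opnorm (entry (mmul M N) x z) \<le> (\<Sum>y\<in>C. opnorm (entry M x y) * opnorm (entry N y z))"
proof -
  have entries: "bounded_op (entry M x y)" "bounded_op (entry N y z)" for y
    using opnorm_entry_le[OF M, of x y] opnorm_entry_le[OF N, of y z] by simp_all
  have "opnorm (\<lambda>i j. \<Sum>y\<in>C. mmul (entry M x y) (entry N y z) i j)
      \<le> (\<Sum>y\<in>C. opnorm (mmul (entry M x y) (entry N y z)))"
    using opnorm_mmul_le[OF entries] by (intro conjunct2[OF bounded_op_sum[OF C]]) auto
  then have "opnorm (entry (mmul M N) x z) \<le> (\<Sum>y\<in>C. opnorm (mmul (entry M x y) (entry N y z)))"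
    using entry_mmul_eq_sum[OF M N C vanish] by simp
  also have "\<dots> \<le> (\<Sum>y\<in>C. opnorm (entry M x y) * opnorm (entry N y z))"
    using opnorm_mmul_le[OF entries] by (intro sum_mono) auto
  finally show ?thesis .
qed

lemma supp_eps_mmul_left:
  fixes S T :: "('a::metric_space \<times> nat) mat"
  assumes bg: "bounded_geometry TYPE('a)" and S: "S \<in> alg_roe Z" and T: "T \<in> alg_roe Z'" and "e > 0"
  obtains R \<delta> where "\<delta> > 0"
    "fst ` supp_eps e (mmul S T) \<subseteq> {x. \<exists>z \<in> fst ` supp_eps \<delta> T. dist x z \<le> R}"
proof -
  obtain R where R: "\<And>x y i j. dist x y > R \<Longrightarrow> S (x, i) (y, j) = 0"
    using alg_roe_propagation[OF S] by metis
  obtain N :: nat where fin: "\<And>x::'a. finite {y. dist x y \<le> R}" and card: "\<And>x::'a. card {y. dist x y \<le> R} \<le> N"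
    using bounded_geometryE[OF bg] by metis
  have bd: "bounded_op S" "bounded_op T" using alg_roeD(1) S T by blast+
  define K where "K = opnorm S + 1"
  have "K > 0" unfolding K_def using opnorm_nonneg[OF bd(1)] by simp
  define \<delta> where "\<delta> = e / ((real N + 1) * K)"
  have "\<delta> > 0" unfolding \<delta>_def using \<open>e > 0\<close> \<open>K > 0\<close> by simp
  have "\<exists>y. dist x y \<le> R \<and> \<delta> \<le> opnorm (entry T y z)" if xz: "e \<le> opnorm (entry (mmul S T) x z)" for x z
  proof -
    have "opnorm (entry (mmul S T) x z)
        \<le> (\<Sum>y\<in>{y. dist x y \<le> R}. opnorm (entry S x y) * opnorm (entry T y z))"
      by (rule opnorm_entry_mmul_le[OF bd fin]) (simp add: R)
    with xz have sum: "e \<le> (\<Sum>y\<in>{y. dist x y \<le> R}. opnorm (entry S x y) * opnorm (entry T y z))"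
      by linarith
    have bound: "0 \<le> opnorm (entry S x y) \<and> opnorm (entry S x y) \<le> K" for y
      using opnorm_entry_le[OF bd(1), of x y] opnorm_nonneg unfolding K_def by fastforce
    show ?thesis
      using weighted_sum_ge_imp_term_ge[OF fin card bound \<open>K > 0\<close> \<open>e > 0\<close> sum] unfolding \<delta>_def by auto
  qed
  then have "fst ` supp_eps e (mmul S T) \<subseteq> {x. \<exists>z \<in> fst ` supp_eps \<delta> T. dist x z \<le> R}"
    unfolding supp_eps_def by (fastforce intro: rev_image_eqI)
  with \<open>\<delta> > 0\<close> show ?thesis by (rule that)
qed

lemma supp_eps_mmul_right:
  fixes S T :: "('a::metric_space \<times> nat) mat"
  assumes bg: "bounded_geometry TYPE('a)" and S: "S \<in> alg_roe Z" and T: "T \<in> alg_roe Z'" and "e > 0"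
  obtains \<delta> where "\<delta> > 0" "fst ` supp_eps e (mmul T S) \<subseteq> fst ` supp_eps \<delta> T"
proof -
  obtain R where R: "\<And>x y i j. dist x y > R \<Longrightarrow> S (x, i) (y, j) = 0"
    using alg_roe_propagation[OF S] by metis
  obtain N :: nat where fin: "\<And>z::'a. finite {y. dist z y \<le> R}" and card: "\<And>z::'a. card {y. dist z y \<le> R} \<le> N"
    using bounded_geometryE[OF bg] by metis
  have bd: "bounded_op S" "bounded_op T" using alg_roeD(1) S T by blast+
  define K where "K = opnorm S + 1"
  have "K > 0" unfolding K_def using opnorm_nonneg[OF bd(1)] by simp
  define \<delta> where "\<delta> = e / ((real N + 1) * K)"
  have "\<delta> > 0" unfolding \<delta>_def using \<open>e > 0\<close> \<open>K > 0\<close> by simp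
  have "\<exists>y. \<delta> \<le> opnorm (entry T x y)" if xz: "e \<le> opnorm (entry (mmul T S) x z)" for x z
  proof -
    have "opnorm (entry (mmul T S) x z)
        \<le> (\<Sum>y\<in>{y. dist z y \<le> R}. opnorm (entry T x y) * opnorm (entry S y z))"
      by (rule opnorm_entry_mmul_le[OF bd(2,1) fin]) (simp add: R dist_commute)
    with xz have "e \<le> (\<Sum>y\<in>{y. dist z y \<le> R}. opnorm (entry T x y) * opnorm (entry S y z))"
      by linarith
    then have sum: "e \<le> (\<Sum>y\<in>{y. dist z y \<le> R}. opnorm (entry S y z) * opnorm (entry T x y))"
      by (simp add: mult.commute)
    have bound: "0 \<le> opnorm (entry S y z) \<and> opnorm (entry S y z) \<le> K" for y
      using opnorm_entry_le[OF bd(1), of y z] opnorm_nonneg unfolding K_def by fastforce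
    show ?thesis
      using weighted_sum_ge_imp_term_ge[OF fin card bound \<open>K > 0\<close> \<open>e > 0\<close> sum] unfolding \<delta>_def by auto
  qed
  then have "fst ` supp_eps e (mmul T S) \<subseteq> fst ` supp_eps \<delta> T"
    unfolding supp_eps_def by (fastforce intro: rev_image_eqI)
  with \<open>\<delta> > 0\<close> show ?thesis by (rule that)
qed

lemma supp_eps_add_subset:
  assumes "bounded_op S" "bounded_op T"
  shows "supp_eps e (\<lambda>p q. S p q + T p q) \<subseteq> supp_eps (e / 2) S \<union> supp_eps (e / 2) T"
proof -
  have "e / 2 \<le> opnorm (entry S x y) \<or> e / 2 \<le> opnorm (entry T x y)"
    if "e \<le> opnorm (entry (\<lambda>p q. S p q + T p q) x y)" for x y
  proof -
    have "opnorm (entry (\<lambda>p q. S p q + T p q) x y) \<le> opnorm (entry S x y) + opnorm (entry T x y)"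
      using opnorm_add_le[OF opnorm_entry_le[OF assms(1), THEN conjunct1]
          opnorm_entry_le[OF assms(2), THEN conjunct1]]
      by (simp add: entry_def)
    with that show ?thesis by linarith
  qed
  then show ?thesis unfolding supp_eps_def by auto
qed

lemma supp_eps_cmult_subset:
  assumes "bounded_op S" "e > 0"
  shows "supp_eps e (\<lambda>p q. c * S p q) \<subseteq> supp_eps (e / (cmod c + 1)) S"
proof (clarsimp simp: supp_eps_def)
  fix x y assume "e \<le> opnorm (entry (\<lambda>p q. c * S p q) x y)"
  moreover have "opnorm (entry (\<lambda>p q. c * S p q) x y) \<le> cmod c * opnorm (entry S x y)"
    using opnorm_cmult_le[OF opnorm_entry_le[OF assms(1), THEN conjunct1]] by (simp add: entry_def)
  moreover have "cmod c * opnorm (entry S x y) \<le> (cmod c + 1) * opnorm (entry S x y)"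
    using opnorm_nonneg[OF opnorm_entry_le[OF assms(1), THEN conjunct1]] by (simp add: mult_right_mono)
  ultimately have "e \<le> (cmod c + 1) * opnorm (entry S x y)" by linarith
  then show "e / (cmod c + 1) \<le> opnorm (entry S x y)"
    by (simp add: divide_le_eq mult.commute add_nonneg_pos)
qed

section \<open>The ideals\<close>

definition alg_ideal :: "'a::metric_space filter set \<Rightarrow> ('a \<times> nat) mat set" where
  "alg_ideal U = {S \<in> alg_roe UNIV. \<forall>e>0. bclos beta_top (fst ` supp_eps e S) \<subseteq> U}"

lemma alg_ideal_alg_roe: "S \<in> alg_ideal U \<Longrightarrow> S \<in> alg_roe UNIV"
  and alg_ideal_supp_eps: "S \<in> alg_ideal U \<Longrightarrow> e > 0 \<Longrightarrow> bclos beta_top (fst ` supp_eps e S) \<subseteq> U"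
  unfolding alg_ideal_def by simp_all

lemma alg_ideal_bounded: "alg_ideal U \<subseteq> Collect bounded_op"
  using alg_ideal_alg_roe alg_roeD(1) by blast

lemma alg_ideal_add:
  assumes S: "S \<in> alg_ideal U" and T: "T \<in> alg_ideal U"
  shows "(\<lambda>p q. S p q + T p q) \<in> alg_ideal U"
  unfolding alg_ideal_def
proof (intro CollectI conjI allI impI)
  show "(\<lambda>p q. S p q + T p q) \<in> alg_roe UNIV"
    using alg_roe_add[OF alg_ideal_alg_roe[OF S] alg_ideal_alg_roe[OF T]] .
  fix e :: real assume "e > 0"
  have "fst ` supp_eps e (\<lambda>p q. S p q + T p q) \<subseteq> fst ` supp_eps (e / 2) S \<union> fst ` supp_eps (e / 2) T"
    using supp_eps_add_subset[of S T e] S T alg_ideal_bounded by blast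
  then have "bclos beta_top (fst ` supp_eps e (\<lambda>p q. S p q + T p q))
      \<subseteq> bclos beta_top (fst ` supp_eps (e / 2) S) \<union> bclos beta_top (fst ` supp_eps (e / 2) T)"
    unfolding bclos_Un[symmetric] by (rule bclos_beta_top_mono)
  also have "\<dots> \<subseteq> U" using alg_ideal_supp_eps[OF S] alg_ideal_supp_eps[OF T] \<open>e > 0\<close> by simp
  finally show "bclos beta_top (fst ` supp_eps e (\<lambda>p q. S p q + T p q)) \<subseteq> U" .
qed

lemma alg_ideal_cmult:
  assumes S: "S \<in> alg_ideal U"
  shows "(\<lambda>p q. c * S p q) \<in> alg_ideal U"
  unfolding alg_ideal_def
proof (intro CollectI conjI allI impI)
  show "(\<lambda>p q. c * S p q) \<in> alg_roe UNIV" using alg_roe_cmult[OF alg_ideal_alg_roe[OF S]] .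
  fix e :: real assume "e > 0"
  have "bclos beta_top (fst ` supp_eps e (\<lambda>p q. c * S p q))
      \<subseteq> bclos beta_top (fst ` supp_eps (e / (cmod c + 1)) S)"
    using supp_eps_cmult_subset[of S e c] S alg_ideal_bounded \<open>e > 0\<close>
    by (intro bclos_beta_top_mono image_mono) blast
  also have "\<dots> \<subseteq> U" using alg_ideal_supp_eps[OF S] \<open>e > 0\<close> by (simp add: add_nonneg_pos)
  finally show "bclos beta_top (fst ` supp_eps e (\<lambda>p q. c * S p q)) \<subseteq> U" .
qed

lemma alg_ideal_mmul_left:
  fixes a :: "('a::metric_space \<times> nat) mat"
  assumes bg: "bounded_geometry TYPE('a)" and inv: "invariant U"
    and a: "a \<in> alg_roe UNIV" and S: "S \<in> alg_ideal U"
  shows "mmul a S \<in> alg_ideal U"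
  unfolding alg_ideal_def
proof (intro CollectI conjI allI impI)
  show "mmul a S \<in> alg_roe UNIV" using alg_roe_mmul[OF bg a alg_ideal_alg_roe[OF S]] .
  fix e :: real assume "e > 0"
  obtain R \<delta> where "\<delta> > 0"
    and sub: "fst ` supp_eps e (mmul a S) \<subseteq> {x. \<exists>z \<in> fst ` supp_eps \<delta> S. dist x z \<le> R}"
    by (rule supp_eps_mmul_left[OF bg a alg_ideal_alg_roe[OF S] \<open>e > 0\<close>])
  have "bclos beta_top (fst ` supp_eps e (mmul a S)) \<subseteq> bclos beta_top {x. \<exists>z \<in> fst ` supp_eps \<delta> S. dist x z \<le> R}"
    using sub by (rule bclos_beta_top_mono)
  also have "\<dots> \<subseteq> U"
    using invariant_bclos_thickening[OF inv alg_ideal_supp_eps[OF S \<open>\<delta> > 0\<close>]] .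
  finally show "bclos beta_top (fst ` supp_eps e (mmul a S)) \<subseteq> U" .
qed

lemma alg_ideal_mmul_right:
  fixes b :: "('a::metric_space \<times> nat) mat"
  assumes bg: "bounded_geometry TYPE('a)" and b: "b \<in> alg_roe UNIV" and S: "S \<in> alg_ideal U"
  shows "mmul S b \<in> alg_ideal U"
  unfolding alg_ideal_def
proof (intro CollectI conjI allI impI)
  show "mmul S b \<in> alg_roe UNIV" using alg_roe_mmul[OF bg alg_ideal_alg_roe[OF S] b] .
  fix e :: real assume "e > 0"
  obtain \<delta> where "\<delta> > 0" and sub: "fst ` supp_eps e (mmul S b) \<subseteq> fst ` supp_eps \<delta> S"
    by (rule supp_eps_mmul_right[OF bg b alg_ideal_alg_roe[OF S] \<open>e > 0\<close>])
  have "bclos beta_top (fst ` supp_eps e (mmul S b)) \<subseteq> bclos beta_top (fst ` supp_eps \<delta> S)"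
    using sub by (rule bclos_beta_top_mono)
  also have "\<dots> \<subseteq> U" using alg_ideal_supp_eps[OF S \<open>\<delta> > 0\<close>] .
  finally show "bclos beta_top (fst ` supp_eps e (mmul S b)) \<subseteq> U" .
qed

lemma compress_alg_ideal:
  assumes S: "S \<in> alg_ideal U"
  shows "compress Y S \<in> alg_ideal U \<inter> alg_roe Y"
proof -
  have "compress Y S \<in> alg_roe Y" using compress_alg_roe[OF alg_ideal_alg_roe[OF S]] .
  moreover have "bclos beta_top (fst ` supp_eps e (compress Y S)) \<subseteq> U" if "e > 0" for e
    using bclos_beta_top_mono[OF image_mono[OF Int_lower1]] alg_ideal_supp_eps[OF S that]
    unfolding supp_eps_compress[OF that] by blast
  ultimately show ?thesis unfolding alg_ideal_def using alg_roe_mono[of Y UNIV] by blast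
qed

definition closed_ideal :: "'i mat set \<Rightarrow> 'i mat set \<Rightarrow> bool" where
  "closed_ideal A J \<longleftrightarrow> J \<subseteq> A \<and>
      (\<forall>a\<in>J. \<forall>b\<in>J. (\<lambda>p q. a p q + b p q) \<in> J) \<and> (\<forall>c. \<forall>a\<in>J. (\<lambda>p q. c * a p q) \<in> J) \<and>
      (\<forall>a\<in>J. \<forall>b\<in>A. mmul a b \<in> J \<and> mmul b a \<in> J) \<and>
      (\<forall>M\<in>A. (\<forall>e>0. \<exists>T\<in>J. opnorm (\<lambda>p q. M p q - T p q) < e) \<longrightarrow> M \<in> J)"

lemma closed_ideal_gen_eq: "closed_ideal_gen A S = \<Inter>{J. closed_ideal A J \<and> S \<subseteq> J}"
  unfolding closed_ideal_gen_def closed_ideal_def by (rule arg_cong[where f=Inter], rule Collect_cong) blast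

lemma closed_ideal_closedD:
  "closed_ideal A J \<Longrightarrow> M \<in> A \<Longrightarrow> (\<And>e. e > 0 \<Longrightarrow> \<exists>T\<in>J. opnorm (\<lambda>p q. M p q - T p q) < e) \<Longrightarrow> M \<in> J"
  unfolding closed_ideal_def by blast

lemma closed_ideal_op_closure_alg_ideal:
  fixes U :: "'a::metric_space filter set"
  assumes bg: "bounded_geometry TYPE('a)" and inv: "invariant U"
  shows "closed_ideal (roe UNIV) (op_closure (alg_ideal U))"
  unfolding closed_ideal_def
proof (intro conjI ballI allI impI)
  show "op_closure (alg_ideal U) \<subseteq> roe UNIV"
    unfolding roe_eq_op_closure using alg_ideal_alg_roe by (intro op_closure_mono) blast
next
  fix M N :: "('a \<times> nat) mat" assume "M \<in> op_closure (alg_ideal U)" "N \<in> op_closure (alg_ideal U)"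
  then show "(\<lambda>p q. M p q + N p q) \<in> op_closure (alg_ideal U)"
    by (intro op_closure_add[OF alg_ideal_bounded alg_ideal_bounded] alg_ideal_add)
next
  fix c and M :: "('a \<times> nat) mat" assume "M \<in> op_closure (alg_ideal U)"
  then show "(\<lambda>p q. c * M p q) \<in> op_closure (alg_ideal U)"
    by (intro op_closure_cmult[OF alg_ideal_bounded] alg_ideal_cmult)
next
  fix M N :: "('a \<times> nat) mat" assume "M \<in> op_closure (alg_ideal U)" "N \<in> roe UNIV"
  then show "mmul M N \<in> op_closure (alg_ideal U)" "mmul N M \<in> op_closure (alg_ideal U)"
    unfolding roe_eq_op_closure
    by (auto intro: op_closure_mmul[OF alg_ideal_bounded alg_roe_bounded] op_closure_mmul[OF alg_roe_bounded alg_ideal_bounded]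
        alg_ideal_mmul_right[OF bg] alg_ideal_mmul_left[OF bg inv])
next
  fix M :: "('a \<times> nat) mat" assume "M \<in> roe UNIV" "\<forall>e>0. \<exists>T\<in>op_closure (alg_ideal U). opnorm (\<lambda>p q. M p q - T p q) < e"
  then have "M \<in> op_closure (op_closure (alg_ideal U))"
    by (intro op_closureI roe_bounded) auto
  then show "M \<in> op_closure (alg_ideal U)" using op_closure_op_closure[OF alg_ideal_bounded] by blast
qed

lemma closed_ideal_inter_roe:
  fixes J :: "('a::metric_space \<times> nat) mat set"
  assumes bg: "bounded_geometry TYPE('a)" and J: "closed_ideal (roe UNIV) J"
  shows "closed_ideal (roe Y) (J \<inter> roe Y)"
  unfolding closed_ideal_def
proof (intro conjI ballI allI impI)
  have YU: "roe Y \<subseteq> roe UNIV" by (rule roe_mono) simp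
  show "J \<inter> roe Y \<subseteq> roe Y" by blast
next
  fix M N assume "M \<in> J \<inter> roe Y" "N \<in> J \<inter> roe Y"
  then show "(\<lambda>p q. M p q + N p q) \<in> J \<inter> roe Y"
    using J roe_add[of M Y N] unfolding closed_ideal_def by blast
next
  fix c M assume "M \<in> J \<inter> roe Y"
  then show "(\<lambda>p q. c * M p q) \<in> J \<inter> roe Y"
    using J roe_cmult[of M Y c] unfolding closed_ideal_def by blast
next
  fix M N assume M: "M \<in> J \<inter> roe Y" and N: "N \<in> roe Y"
  have "N \<in> roe UNIV" using N roe_mono[of Y UNIV] by blast
  then show "mmul M N \<in> J \<inter> roe Y" "mmul N M \<in> J \<inter> roe Y"
    using J M N roe_mmul[OF bg, of M Y N] roe_mmul[OF bg, of N Y M] unfolding closed_ideal_def by blast+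
next
  fix M assume M: "M \<in> roe Y" and approx: "\<forall>e>0. \<exists>T\<in>J \<inter> roe Y. opnorm (\<lambda>p q. M p q - T p q) < e"
  have "M \<in> roe UNIV" using M roe_mono[of Y UNIV] by blast
  with approx have "M \<in> J" by (intro closed_ideal_closedD[OF J]) blast+
  then show "M \<in> J \<inter> roe Y" using M by blast
qed

lemma bclos_supp_eps_betaY_iff:
  assumes "supported_in Y S" "e > 0"
  shows "bclos (subtopology beta_top (betaY Y)) (fst ` supp_eps e S) \<subseteq> U \<inter> betaY Y
     \<longleftrightarrow> bclos beta_top (fst ` supp_eps e S) \<subseteq> U"
proof -
  have Y: "fst ` supp_eps e S \<subseteq> Y" using fst_supp_eps_subset[OF assms(2,1)] .
  have "bclos beta_top (fst ` supp_eps e S) \<subseteq> betaY Y"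
    unfolding betaY_def by (rule bclos_beta_top_mono[OF Y])
  then show ?thesis unfolding bclos_subtopology_betaY[OF Y] by blast
qed

lemma generators_betaY_eq:
  "{S\<in>alg_roe Y. \<forall>e>0. bclos (subtopology beta_top (betaY Y)) (fst ` supp_eps e S) \<subseteq> U \<inter> betaY Y}
    = alg_ideal U \<inter> alg_roe Y"
  using bclos_supp_eps_betaY_iff[OF alg_roeD(2)] alg_roe_mono[of Y UNIV]
  unfolding alg_ideal_def by blast

lemma opnorm_diff_compress_le:
  assumes "supported_in Y M" "bounded_op M" "bounded_op S"
  shows "opnorm (\<lambda>p q. M p q - compress Y S p q) \<le> opnorm (\<lambda>p q. M p q - S p q)"
proof -
  have "bounded_op (\<lambda>p q. M p q - S p q)" using opnorm_diff_le[OF assms(2,3)] by simp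
  from opnorm_compress_le[OF this, of Y] show ?thesis
    unfolding compress_diff compress_eq_self[OF assms(1)] by simp
qed

lemma op_closure_alg_ideal_subset_closed_ideal:
  assumes MK: "M \<in> op_closure (alg_ideal U)" and MY: "M \<in> roe Y"
    and J: "closed_ideal (roe Y) J" "alg_ideal U \<inter> alg_roe Y \<subseteq> J"
  shows "M \<in> J"
proof (rule closed_ideal_closedD[OF J(1) MY])
  fix e :: real assume "e > 0"
  then obtain S where S: "S \<in> alg_ideal U" "opnorm (\<lambda>p q. M p q - S p q) < e"
    using op_closureD(2)[OF MK] by blast
  have "opnorm (\<lambda>p q. M p q - compress Y S p q) < e"
    using opnorm_diff_compress_le[OF roe_supported[OF MY] roe_bounded[OF MY]] S alg_ideal_bounded
    by fastforce
  moreover have "compress Y S \<in> J" using compress_alg_ideal[OF S(1)] J(2) by blast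
  ultimately show "\<exists>T\<in>J. opnorm (\<lambda>p q. M p q - T p q) < e" by blast
qed

lemma ideal_I_betaY:
  fixes Y :: "'a::metric_space set" and U :: "'a filter set"
  assumes bg: "bounded_geometry TYPE('a)" and inv: "invariant U"
  shows "ideal_I (subtopology beta_top (betaY Y)) Y (U \<inter> betaY Y) = ideal_I beta_top UNIV U \<inter> roe Y"
proof -
  have IY: "ideal_I (subtopology beta_top (betaY Y)) Y (U \<inter> betaY Y)
      = closed_ideal_gen (roe Y) (alg_ideal U \<inter> alg_roe Y)"
    unfolding ideal_I_def generators_betaY_eq ..
  have IX: "ideal_I beta_top UNIV U = closed_ideal_gen (roe UNIV) (alg_ideal U)"
    unfolding ideal_I_def alg_ideal_def ..
  have K: "closed_ideal (roe UNIV) (op_closure (alg_ideal U))"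
    using closed_ideal_op_closure_alg_ideal[OF bg inv] .
  have K_gen: "alg_ideal U \<subseteq> op_closure (alg_ideal U)"
    using subset_op_closure[OF alg_ideal_bounded] .
  show ?thesis
    unfolding IY IX closed_ideal_gen_eq
  proof (intro equalityI subsetI)
    fix M assume M: "M \<in> \<Inter>{J. closed_ideal (roe Y) J \<and> alg_ideal U \<inter> alg_roe Y \<subseteq> J}"
    have "M \<in> J \<inter> roe Y" if "closed_ideal (roe UNIV) J" "alg_ideal U \<subseteq> J" for J
      using M closed_ideal_inter_roe[OF bg that(1), of Y] that(2) alg_roe_subset_roe by blast
    then show "M \<in> \<Inter>{J. closed_ideal (roe UNIV) J \<and> alg_ideal U \<subseteq> J} \<inter> roe Y"
      using K K_gen by blast
  next
    fix M assume "M \<in> \<Inter>{J. closed_ideal (roe UNIV) J \<and> alg_ideal U \<subseteq> J} \<inter> roe Y"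
    then have "M \<in> op_closure (alg_ideal U)" "M \<in> roe Y" using K K_gen by blast+
    then show "M \<in> \<Inter>{J. closed_ideal (roe Y) J \<and> alg_ideal U \<inter> alg_roe Y \<subseteq> J}"
      using op_closure_alg_ideal_subset_closed_ideal by blast
  qed
qed

lemma ideal_G_betaY:
  "ideal_G (subtopology beta_top (betaY Y)) Y (U \<inter> betaY Y) = ideal_G beta_top UNIV U \<inter> roe Y"
  using bclos_supp_eps_betaY_iff[OF roe_supported] roe_mono[of Y UNIV]
  unfolding ideal_G_def by blast

theorem lemma2p9:
  fixes Y :: "'a::metric_space set" and U :: "'a filter set"
  assumes "bounded_geometry TYPE('a)"
    and "openin beta_top U"
    and "invariant U"
  shows "ideal_I (subtopology beta_top (betaY Y)) Y (U \<inter> betaY Y)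
           = ideal_I beta_top UNIV U \<inter> roe Y
       \<and> ideal_G (subtopology beta_top (betaY Y)) Y (U \<inter> betaY Y)
           = ideal_G beta_top UNIV U \<inter> roe Y"
  using ideal_I_betaY[OF assms(1,3)] ideal_G_betaY by blast

end
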